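(* Let $M,N$ be locally free $\widehat H$-modules with $\operatorname{Ext}^1_{\widehat H}(M,N)=0$. Then the natural map $\mathbb{F}\otimes_{\mathbb{F}[[\epsilon]]}\operatorname{Hom}_{\widehat H}(M,N)\to\operatorname{Hom}_H(\operatorname{Red}(M),\operatorname{Red}(N))$ is an isomorphism of $\mathbb{F}$-vector spaces.
   Context: Setup for $H$. Let $I=\{1,\dots,n\}$ and let $C=(c_{ij})\in\mathbb{Z}^{I\times I}$ be a symmetrizable generalized Cartan matrix with symmetrizer $D=\operatorname{diag}(c_1,\dots,c_n)$, $c_i\in\mathbb{Z}_{>0}$, $DC$ symmetric. An orientation $\Omega\subset I\times I$ contains, for each pair $i\ne j$ with $c_{ij}<0$, exactly one of $(i,j),(j,i)$, and nothing else; we assume $(i,j)\in\Omega\Rightarrow i<j$. For $c_{ij}<0$ set $g_{ij}=\gcd(c_{ij},c_{ji})$, $f_{ij}=-c_{ij}/g_{ij}$. For a field $\mathbb{F}$ let $H_i=\mathbb{F}[\varepsilon_i]/(\varepsilon_i^{c_i})$, $S=\prod_{i\in I}H_i$; for $(i,j)\in\Omega$ let ${}_iH'_j$ be the $H_i$-$H_j$-bimodule generated by $\alpha_{ij}$ subject to $\varepsilon_i^{f_{ji}}\alpha_{ij}=\alpha_{ij}\varepsilon_j^{f_{ij}}$, ${}_iH_j=({}_iH'_j)^{g_{ij}}$, and $H=T_S(\bigoplus_{(i,j)\in\Omega}{}_iH_j)$. Setup for $\widehat H$. Let $c=\operatorname{lcm}(c_i)$, $R=\mathbb{F}[[\epsilon]]$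 (with $\mathbb{F}=R/\epsilon R$); inside $\mathbb{F}((\epsilon^{1/c}))$ put $\epsilon_i=\epsilon^{1/c_i}$. Let $\widehat S=\prod_i\mathbb{F}[[\epsilon_i]]$, ${}_i\widehat H_j=(\mathbb{F}[[\epsilon_i,\epsilon_j]])^{g_{ij}}$, $\widehat H=T_{\widehat S}(\bigoplus_{(i,j)\in\Omega}{}_i\widehat H_j)$, an $R$-algebra via $\epsilon\mapsto(\epsilon_i^{c_i})_i$; $\widehat H/\epsilon\widehat H\cong H$ and $\operatorname{Red}(M)=H\otimes_{\widehat H}M=M/\epsilon M$. An $\widehat H$-module is locally free if each $e_iM$ is free over $\mathbb{F}[[\epsilon_i]]$. *)

theory Defs
  imports "HOL-Algebra.Module" "HOL-Algebra.FiniteProduct"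
          "HOL-Computational_Algebra.Formal_Power_Series"
begin

definition Iset :: "nat \<Rightarrow> nat set" where
  "Iset n = {1..n}"

definition cartan_setup ::
  "nat \<Rightarrow> (nat \<Rightarrow> nat \<Rightarrow> int) \<Rightarrow> (nat \<Rightarrow> nat) \<Rightarrow> (nat \<times> nat) set \<Rightarrow> bool" where
  "cartan_setup n C cs Om \<longleftrightarrow>
     \<comment> \<open>generalized Cartan matrix\<close>
     (\<forall>i\<in>Iset n. C i i = 2) \<and>
     (\<forall>i\<in>Iset n. \<forall>j\<in>Iset n. i \<noteq> j \<longrightarrow> C i j \<le> 0) \<and>
     (\<forall>i\<in>Iset n. \<forall>j\<in>Iset n. C i j = 0 \<longleftrightarrow> C j i = 0) \<and>
     \<comment> \<open>symmetrizer D = diag(c_1,...,c_n), c_i > 0, DC symmetric\<close>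
     (\<forall>i\<in>Iset n. cs i > 0) \<and>
     (\<forall>i\<in>Iset n. \<forall>j\<in>Iset n. int (cs i) * C i j = int (cs j) * C j i) \<and>
     \<comment> \<open>orientation, with (i,j) in Om implies i < j\<close>
     Om \<subseteq> Iset n \<times> Iset n \<and>
     (\<forall>(i,j)\<in>Om. i < j \<and> C i j < 0) \<and>
     (\<forall>i\<in>Iset n. \<forall>j\<in>Iset n. i \<noteq> j \<and> C i j < 0 \<longrightarrow>
        ((i,j) \<in> Om \<longleftrightarrow> (j,i) \<notin> Om))"

definition gg :: "(nat \<Rightarrow> nat \<Rightarrow> int) \<Rightarrow> nat \<Rightarrow> nat \<Rightarrow> nat" where
  "gg C i j = nat (gcd (C i j) (C j i))"

definition clcm :: "nat \<Rightarrow> (nat \<Rightarrow> nat) \<Rightarrow> nat" where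
  "clcm n cs = Lcm (cs ` Iset n)"

text \<open>We model F[[eps^(1/c)]] (nonnegative part of F((eps^(1/c)))) as 'f fps in the
  variable t = eps^(1/c).  Then eps_i = eps^(1/c_i) = t^(c/c_i) and eps = t^c.
  The ring F[[eps_i]] is identified with 'f fps in the variable eps_i (= fps_X);
  its embedding into F[[t]] is p \<mapsto> p(t^(c/c_i)).\<close>

definition fps_ring :: "'f::field fps ring" where
  "fps_ring = \<lparr>carrier = UNIV, monoid.mult = (*), monoid.one = 1, zero = 0, add = (+)\<rparr>"

definition emb :: "nat \<Rightarrow> (nat \<Rightarrow> nat) \<Rightarrow> nat \<Rightarrow> 'f::field fps \<Rightarrow> 'f fps" where
  "emb n cs i p = fps_compose p (fps_X ^ (clcm n cs div cs i))"

text \<open>F[[eps_i, eps_j]]: power series in t supported on the monoid generated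
  by the exponents c/c_i and c/c_j of eps_i and eps_j.\<close>
definition Rij :: "nat \<Rightarrow> (nat \<Rightarrow> nat) \<Rightarrow> nat \<Rightarrow> nat \<Rightarrow> 'f::field fps set" where
  "Rij n cs i j = {x. \<forall>k. fps_nth x k \<noteq> 0 \<longrightarrow>
      (\<exists>a b. k = a * (clcm n cs div cs i) + b * (clcm n cs div cs j))}"

text \<open>A module over the tensor algebra T_S(B), S = prod_i F[[eps_i]],
  B = bigoplus_{(i,j) in Om} iHj with iHj = F[[eps_i,eps_j]]^(g_ij), is an S-module
  M = bigoplus_i e_i M (each e_i M an F[[eps_i]]-module) together with, for each
  (i,j) in Om and each of the g_ij summands k, a map
  bet i j k : F[[eps_i,eps_j]] x e_j M \<rightarrow> e_i M that is biadditive and balanced,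
  i.e. a left F[[eps_i]]-linear map iHj \<otimes>_{F[[eps_j]]} e_j M \<rightarrow> e_i M.\<close>

record ('f, 'v) hmod =
  cmp :: "nat \<Rightarrow> ('f fps, 'v) module"
  bet :: "nat \<Rightarrow> nat \<Rightarrow> nat \<Rightarrow> 'f fps \<Rightarrow> 'v \<Rightarrow> 'v"

definition is_hmod ::
  "nat \<Rightarrow> (nat \<Rightarrow> nat \<Rightarrow> int) \<Rightarrow> (nat \<Rightarrow> nat) \<Rightarrow> (nat \<times> nat) set \<Rightarrow>
   ('f::field, 'v) hmod \<Rightarrow> bool" where
  "is_hmod n C cs Om M \<longleftrightarrow>
     (\<forall>i\<in>Iset n. Module.module fps_ring (cmp M i)) \<and>
     (\<forall>(i,j)\<in>Om. \<forall>k<gg C i j.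
        (\<forall>x\<in>Rij n cs i j. \<forall>m\<in>carrier (cmp M j).
            bet M i j k x m \<in> carrier (cmp M i)) \<and>
        (\<forall>x\<in>Rij n cs i j. \<forall>y\<in>Rij n cs i j. \<forall>m\<in>carrier (cmp M j).
            bet M i j k (x + y) m = add (cmp M i) (bet M i j k x m) (bet M i j k y m)) \<and>
        (\<forall>x\<in>Rij n cs i j. \<forall>m\<in>carrier (cmp M j). \<forall>m'\<in>carrier (cmp M j).
            bet M i j k x (add (cmp M j) m m') =
              add (cmp M i) (bet M i j k x m) (bet M i j k x m')) \<and>
        (\<forall>x\<in>Rij n cs i j. \<forall>m\<in>carrier (cmp M j). \<forall>r.
            bet M i j k (emb n cs i r * x) m = smult (cmp M i) r (bet M i j k x m)) \<and>
        (\<forall>x\<in>Rij n cs i j. \<forall>m\<in>carrier (cmp M j). \<forall>r.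
            bet M i j k (x * emb n cs j r) m = bet M i j k x (smult (cmp M j) r m)))"

definition is_hom ::
  "nat \<Rightarrow> (nat \<Rightarrow> nat \<Rightarrow> int) \<Rightarrow> (nat \<Rightarrow> nat) \<Rightarrow> (nat \<times> nat) set \<Rightarrow>
   ('f::field, 'v) hmod \<Rightarrow> ('f, 'w) hmod \<Rightarrow> (nat \<Rightarrow> 'v \<Rightarrow> 'w) \<Rightarrow> bool" where
  "is_hom n C cs Om M N f \<longleftrightarrow>
     (\<forall>i\<in>Iset n.
        (\<forall>m\<in>carrier (cmp M i). f i m \<in> carrier (cmp N i)) \<and>
        (\<forall>m\<in>carrier (cmp M i). \<forall>m'\<in>carrier (cmp M i).
            f i (add (cmp M i) m m') = add (cmp N i) (f i m) (f i m')) \<and>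
        (\<forall>m\<in>carrier (cmp M i). \<forall>r.
            f i (smult (cmp M i) r m) = smult (cmp N i) r (f i m))) \<and>
     (\<forall>(i,j)\<in>Om. \<forall>k<gg C i j. \<forall>x\<in>Rij n cs i j. \<forall>m\<in>carrier (cmp M j).
        f i (bet M i j k x m) = bet N i j k x (f j m))"

text \<open>Action of eps = eps_i^(c_i) on e_i M.\<close>
definition eps_act :: "(nat \<Rightarrow> nat) \<Rightarrow> ('f::field, 'v) hmod \<Rightarrow> nat \<Rightarrow> 'v \<Rightarrow> 'v" where
  "eps_act cs M i m = smult (cmp M i) (fps_X ^ cs i) m"

definition free_module :: "('f::field fps, 'v) module \<Rightarrow> bool" where
  "free_module Mi \<longleftrightarrow>
     (\<exists>B \<subseteq> carrier Mi. \<forall>m\<in>carrier Mi. \<exists>!c::'v \<Rightarrow> 'f fps.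
        finite {b\<in>B. c b \<noteq> 0} \<and> (\<forall>b. b \<notin> B \<longrightarrow> c b = 0) \<and>
        m = finsum Mi (\<lambda>b. smult Mi (c b) b) {b\<in>B. c b \<noteq> 0})"

definition locally_free :: "nat \<Rightarrow> ('f::field, 'v) hmod \<Rightarrow> bool" where
  "locally_free n M \<longleftrightarrow> (\<forall>i\<in>Iset n. free_module (cmp M i))"

text \<open>Ext^1 = 0: every extension 0 \<rightarrow> N \<rightarrow> E \<rightarrow> M \<rightarrow> 0 of \<open>\<widehat>H\<close>-modules splits.
  Up to isomorphism of extensions, every extension has underlying sets
  e_i E = e_i N \<times> e_i M with inclusion n \<mapsto> (n,0) and projection (n,m) \<mapsto> m.\<close>
definition ext1_zero ::
  "nat \<Rightarrow> (nat \<Rightarrow> nat \<Rightarrow> int) \<Rightarrow> (nat \<Rightarrow> nat) \<Rightarrow> (nat \<times> nat) set \<Rightarrow>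
   ('f::field, 'm) hmod \<Rightarrow> ('f, 'n) hmod \<Rightarrow> bool" where
  "ext1_zero n C cs Om M N \<longleftrightarrow>
     (\<forall>E :: ('f, 'n \<times> 'm) hmod.
        is_hmod n C cs Om E \<and>
        (\<forall>i\<in>Iset n. carrier (cmp E i) = carrier (cmp N i) \<times> carrier (cmp M i)) \<and>
        is_hom n C cs Om N E (\<lambda>i x. (x, zero (cmp M i))) \<and>
        is_hom n C cs Om E M (\<lambda>i p. snd p)
        \<longrightarrow> (\<exists>s. is_hom n C cs Om M E s \<and>
               (\<forall>i\<in>Iset n. \<forall>m\<in>carrier (cmp M i). snd (s i m) = m)))"

definition ecoset :: "(nat \<Rightarrow> nat) \<Rightarrow> ('f::field, 'v) hmod \<Rightarrow> nat \<Rightarrow> 'v \<Rightarrow> 'v set" where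
  "ecoset cs M i m = {add (cmp M i) m (eps_act cs M i x) | x. x \<in> carrier (cmp M i)}"

definition rep :: "'v set \<Rightarrow> 'v" where
  "rep A = (SOME a. a \<in> A)"

text \<open>Red(M) = M/eps M, an \<open>\<widehat>H\<close>-module annihilated by eps, i.e. an H-module
  (H = \<open>\<widehat>H\<close>/eps \<open>\<widehat>H\<close>).  Elements are the cosets m + eps e_i M.\<close>
definition Red :: "(nat \<Rightarrow> nat) \<Rightarrow> ('f::field, 'v) hmod \<Rightarrow> ('f, 'v set) hmod" where
  "Red cs M = \<lparr>cmp = (\<lambda>i. \<lparr>carrier = ecoset cs M i ` carrier (cmp M i),
                         monoid.mult = (\<lambda>_ _. undefined), monoid.one = undefined,
                         zero = ecoset cs M i (zero (cmp M i)),
                         add = (\<lambda>A B. ecoset cs M i (add (cmp M i) (rep A) (rep B))),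
                         smult = (\<lambda>r A. ecoset cs M i (smult (cmp M i) r (rep A)))\<rparr>),
               bet = (\<lambda>i j k x A. ecoset cs M i (bet M i j k x (rep A)))\<rparr>"

definition red_hom ::
  "(nat \<Rightarrow> nat) \<Rightarrow> ('f::field, 'n) hmod \<Rightarrow> (nat \<Rightarrow> 'm \<Rightarrow> 'n) \<Rightarrow> nat \<Rightarrow> 'm set \<Rightarrow> 'n set" where
  "red_hom cs N f i A = ecoset cs N i (f i (rep A))"

end

theory Submission
  imports Defs
begin

text \<open>
  Since \<open>N\<close> is locally free, multiplication by \<open>\<epsilon>\<close> is injective on \<open>N\<close>. Injectivity: if
  \<open>Red(f) = 0\<close> then \<open>f\<close> takes values in \<open>\<epsilon>N\<close>, and \<open>g = \<epsilon>\<^sup>-\<^sup>1 \<circ> f\<close> is again a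
  homomorphism, with \<open>f = \<epsilon>g\<close>. Surjectivity: a homomorphism \<open>\<phi> : Red(M) \<rightarrow> Red(N)\<close> has a
  set-theoretic lift \<open>\<psi> : M \<rightarrow> N\<close>. The pullback \<open>E = {(a, b) | a \<equiv> \<psi>(b) mod \<epsilon>N}\<close> of
  \<open>N \<rightarrow> Red(N)\<close> along \<open>\<phi>\<close> is an \<open>\<widehat>H\<close>-module and an extension of \<open>M\<close> by \<open>N\<close>,
  via \<open>x \<mapsto> (\<epsilon>x, 0)\<close> and \<open>(a, b) \<mapsto> b\<close>. As \<open>Ext\<^sup>1(M, N) = 0\<close> it splits, and the first
  component \<open>f\<close> of a splitting satisfies \<open>f(b) \<equiv> \<psi>(b) mod \<epsilon>N\<close>, that is \<open>Red(f) = \<phi>\<close>.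
\<close>

lemma (in Module.module) submoduleI_smult_closed:
  assumes "H \<subseteq> carrier M" and "\<zero>\<^bsub>M\<^esub> \<in> H"
    and "\<And>a b. a \<in> H \<Longrightarrow> b \<in> H \<Longrightarrow> a \<oplus>\<^bsub>M\<^esub> b \<in> H"
    and "\<And>r a. r \<in> carrier R \<Longrightarrow> a \<in> H \<Longrightarrow> r \<odot>\<^bsub>M\<^esub> a \<in> H"
  shows "submodule H R M"
proof (rule submoduleI)
  fix a assume a: "a \<in> H"
  then have "\<ominus>\<^bsub>M\<^esub> a = (\<ominus> \<one>) \<odot>\<^bsub>M\<^esub> a"
    using assms(1) by (auto simp: smult_l_minus)
  then show "\<ominus>\<^bsub>M\<^esub> a \<in> H" using a assms(4) by simp
qed (use assms in auto)

definition prod_module :: "('r, 'a) module \<Rightarrow> ('r, 'b) module \<Rightarrow> ('r, 'a \<times> 'b) module" where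
  "prod_module A B = \<lparr>carrier = carrier A \<times> carrier B,
     monoid.mult = (\<lambda>_ _. undefined), monoid.one = undefined,
     zero = (\<zero>\<^bsub>A\<^esub>, \<zero>\<^bsub>B\<^esub>),
     add = (\<lambda>p q. (fst p \<oplus>\<^bsub>A\<^esub> fst q, snd p \<oplus>\<^bsub>B\<^esub> snd q)),
     smult = (\<lambda>r p. (r \<odot>\<^bsub>A\<^esub> fst p, r \<odot>\<^bsub>B\<^esub> snd p))\<rparr>"

lemma module_prod_module:
  assumes "Module.module R A" and "Module.module R B"
  shows "Module.module R (prod_module A B)"
proof -
  interpret A: Module.module R A by fact
  interpret B: Module.module R B by fact
  show ?thesis
  proof (rule moduleI)
    show "abelian_group (prod_module A B)"
    proof (rule abelian_groupI)
      fix p assume "p \<in> carrier (prod_module A B)"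
      then show "\<exists>q\<in>carrier (prod_module A B). q \<oplus>\<^bsub>prod_module A B\<^esub> p = \<zero>\<^bsub>prod_module A B\<^esub>"
        by (intro bexI[of _ "(\<ominus>\<^bsub>A\<^esub> fst p, \<ominus>\<^bsub>B\<^esub> snd p)"])
          (auto simp: prod_module_def A.l_neg B.l_neg)
    qed (auto simp: prod_module_def A.a_ac B.a_ac)
  qed (auto simp: prod_module_def A.smult_l_distr B.smult_l_distr A.smult_r_distr
      B.smult_r_distr A.smult_assoc1 B.smult_assoc1 A.is_cring)
qed

lemma module_sub_prod_module:
  assumes A: "Module.module R A" and B: "Module.module R B" and "S \<subseteq> carrier A \<times> carrier B"
    and "(\<zero>\<^bsub>A\<^esub>, \<zero>\<^bsub>B\<^esub>) \<in> S"
    and "\<And>p q. p \<in> S \<Longrightarrow> q \<in> S \<Longrightarrow> (fst p \<oplus>\<^bsub>A\<^esub> fst q, snd p \<oplus>\<^bsub>B\<^esub> snd q) \<in> S"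
    and "\<And>r p. r \<in> carrier R \<Longrightarrow> p \<in> S \<Longrightarrow> (r \<odot>\<^bsub>A\<^esub> fst p, r \<odot>\<^bsub>B\<^esub> snd p) \<in> S"
  shows "Module.module R ((prod_module A B)\<lparr>carrier := S\<rparr>)"
proof -
  interpret AB: Module.module R "prod_module A B" using module_prod_module[OF A B] .
  have "submodule S R (prod_module A B)"
    by (rule AB.submoduleI_smult_closed) (use assms(3-) in \<open>auto simp: prod_module_def\<close>)
  then show ?thesis using submodule.submodule_is_module AB.module_axioms by blast
qed

definition inverse_maps :: "'b set \<Rightarrow> 'a set \<Rightarrow> ('b \<Rightarrow> 'a) \<Rightarrow> ('a \<Rightarrow> 'b) \<Rightarrow> bool" where
  "inverse_maps X Y T T' \<longleftrightarrow>
     (\<forall>u\<in>X. T u \<in> Y \<and> T' (T u) = u) \<and> (\<forall>p\<in>Y. T' p \<in> X \<and> T (T' p) = p)"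

definition transport_module ::
  "('r, 'a) module \<Rightarrow> 'b set \<Rightarrow> ('b \<Rightarrow> 'a) \<Rightarrow> ('a \<Rightarrow> 'b) \<Rightarrow> ('r, 'b) module" where
  "transport_module P X T T' = \<lparr>carrier = X,
     monoid.mult = (\<lambda>_ _. undefined), monoid.one = undefined,
     zero = T' \<zero>\<^bsub>P\<^esub>, add = (\<lambda>u v. T' (T u \<oplus>\<^bsub>P\<^esub> T v)),
     smult = (\<lambda>r u. T' (r \<odot>\<^bsub>P\<^esub> T u))\<rparr>"

lemma module_transport_module:
  assumes P: "Module.module R P" and inv: "inverse_maps X (carrier P) T T'"
  shows "Module.module R (transport_module P X T T')"
proof -
  interpret P: Module.module R P by fact
  note inv = inv[unfolded inverse_maps_def]
  show ?thesis
  proof (rule moduleI)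
    show "abelian_group (transport_module P X T T')"
    proof (rule abelian_groupI)
      fix u assume "u \<in> carrier (transport_module P X T T')"
      then show "\<exists>v\<in>carrier (transport_module P X T T').
          v \<oplus>\<^bsub>transport_module P X T T'\<^esub> u = \<zero>\<^bsub>transport_module P X T T'\<^esub>"
        by (intro bexI[of _ "T' (\<ominus>\<^bsub>P\<^esub> T u)"]) (use inv in \<open>auto simp: transport_module_def P.l_neg\<close>)
    qed (use inv in \<open>auto simp: transport_module_def P.a_ac\<close>)
  qed (use inv in \<open>auto simp: transport_module_def P.smult_l_distr P.smult_r_distr
      P.smult_assoc1 P.is_cring\<close>)
qed

lemma fps_ring_carrier [simp]: "r \<in> carrier fps_ring"
  by (simp add: fps_ring_def)

lemma is_hmodI:
  assumes "\<And>i. i \<in> Iset n \<Longrightarrow> Module.module fps_ring (cmp P i)"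
    and "\<And>i j k x m. (i,j) \<in> Om \<Longrightarrow> k < gg C i j \<Longrightarrow> x \<in> Rij n cs i j \<Longrightarrow> m \<in> carrier (cmp P j) \<Longrightarrow>
           bet P i j k x m \<in> carrier (cmp P i)"
    and "\<And>i j k x y m. (i,j) \<in> Om \<Longrightarrow> k < gg C i j \<Longrightarrow> x \<in> Rij n cs i j \<Longrightarrow> y \<in> Rij n cs i j \<Longrightarrow>
           m \<in> carrier (cmp P j) \<Longrightarrow> bet P i j k (x + y) m = bet P i j k x m \<oplus>\<^bsub>cmp P i\<^esub> bet P i j k y m"
    and "\<And>i j k x m m'. (i,j) \<in> Om \<Longrightarrow> k < gg C i j \<Longrightarrow> x \<in> Rij n cs i j \<Longrightarrow> m \<in> carrier (cmp P j) \<Longrightarrow>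
           m' \<in> carrier (cmp P j) \<Longrightarrow>
           bet P i j k x (m \<oplus>\<^bsub>cmp P j\<^esub> m') = bet P i j k x m \<oplus>\<^bsub>cmp P i\<^esub> bet P i j k x m'"
    and "\<And>i j k x m r. (i,j) \<in> Om \<Longrightarrow> k < gg C i j \<Longrightarrow> x \<in> Rij n cs i j \<Longrightarrow> m \<in> carrier (cmp P j) \<Longrightarrow>
           bet P i j k (emb n cs i r * x) m = r \<odot>\<^bsub>cmp P i\<^esub> bet P i j k x m"
    and "\<And>i j k x m r. (i,j) \<in> Om \<Longrightarrow> k < gg C i j \<Longrightarrow> x \<in> Rij n cs i j \<Longrightarrow> m \<in> carrier (cmp P j) \<Longrightarrow>
           bet P i j k (x * emb n cs j r) m = bet P i j k x (r \<odot>\<^bsub>cmp P j\<^esub> m)"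
  shows "is_hmod n C cs Om P"
  unfolding is_hmod_def using assms by (intro conjI ballI; clarsimp)

context
  fixes n C cs Om and P :: "('f::field, 'v) hmod"
  assumes P: "is_hmod n C cs Om P"
begin

lemma hmod_module_cmp: "i \<in> Iset n \<Longrightarrow> Module.module fps_ring (cmp P i)"
  using P by (simp add: is_hmod_def)

lemma hmod_arrow:
  assumes "(i,j) \<in> Om" and "k < gg C i j"
  shows hmod_bet_closed: "\<And>x m. x \<in> Rij n cs i j \<Longrightarrow> m \<in> carrier (cmp P j) \<Longrightarrow>
      bet P i j k x m \<in> carrier (cmp P i)"
    and hmod_bet_add_left: "\<And>x y m. x \<in> Rij n cs i j \<Longrightarrow> y \<in> Rij n cs i j \<Longrightarrow>
      m \<in> carrier (cmp P j) \<Longrightarrow> bet P i j k (x + y) m = bet P i j k x m \<oplus>\<^bsub>cmp P i\<^esub> bet P i j k y m"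
    and hmod_bet_add_right: "\<And>x m m'. x \<in> Rij n cs i j \<Longrightarrow> m \<in> carrier (cmp P j) \<Longrightarrow>
      m' \<in> carrier (cmp P j) \<Longrightarrow>
      bet P i j k x (m \<oplus>\<^bsub>cmp P j\<^esub> m') = bet P i j k x m \<oplus>\<^bsub>cmp P i\<^esub> bet P i j k x m'"
    and hmod_bet_emb_left: "\<And>x m r. x \<in> Rij n cs i j \<Longrightarrow> m \<in> carrier (cmp P j) \<Longrightarrow>
      bet P i j k (emb n cs i r * x) m = r \<odot>\<^bsub>cmp P i\<^esub> bet P i j k x m"
    and hmod_bet_emb_right: "\<And>x m r. x \<in> Rij n cs i j \<Longrightarrow> m \<in> carrier (cmp P j) \<Longrightarrow>
      bet P i j k (x * emb n cs j r) m = bet P i j k x (r \<odot>\<^bsub>cmp P j\<^esub> m)"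
  using P assms unfolding is_hmod_def by (auto dest!: bspec[where x="(i,j)"])

end

lemma is_homI:
  assumes "\<And>i m. i \<in> Iset n \<Longrightarrow> m \<in> carrier (cmp A i) \<Longrightarrow> f i m \<in> carrier (cmp B i)"
    and "\<And>i m m'. i \<in> Iset n \<Longrightarrow> m \<in> carrier (cmp A i) \<Longrightarrow> m' \<in> carrier (cmp A i) \<Longrightarrow>
           f i (m \<oplus>\<^bsub>cmp A i\<^esub> m') = f i m \<oplus>\<^bsub>cmp B i\<^esub> f i m'"
    and "\<And>i m r. i \<in> Iset n \<Longrightarrow> m \<in> carrier (cmp A i) \<Longrightarrow> f i (r \<odot>\<^bsub>cmp A i\<^esub> m) = r \<odot>\<^bsub>cmp B i\<^esub> f i m"
    and "\<And>i j k x m. (i,j) \<in> Om \<Longrightarrow> k < gg C i j \<Longrightarrow> x \<in> Rij n cs i j \<Longrightarrow> m \<in> carrier (cmp A j) \<Longrightarrow>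
           f i (bet A i j k x m) = bet B i j k x (f j m)"
  shows "is_hom n C cs Om A B f"
  using assms unfolding is_hom_def by auto

lemma is_homD:
  assumes "is_hom n C cs Om A B f"
  shows is_hom_closed: "\<And>i m. i \<in> Iset n \<Longrightarrow> m \<in> carrier (cmp A i) \<Longrightarrow> f i m \<in> carrier (cmp B i)"
    and is_hom_add: "\<And>i m m'. i \<in> Iset n \<Longrightarrow> m \<in> carrier (cmp A i) \<Longrightarrow> m' \<in> carrier (cmp A i) \<Longrightarrow>
           f i (m \<oplus>\<^bsub>cmp A i\<^esub> m') = f i m \<oplus>\<^bsub>cmp B i\<^esub> f i m'"
    and is_hom_smult: "\<And>i m r. i \<in> Iset n \<Longrightarrow> m \<in> carrier (cmp A i) \<Longrightarrow>
           f i (r \<odot>\<^bsub>cmp A i\<^esub> m) = r \<odot>\<^bsub>cmp B i\<^esub> f i m"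
    and is_hom_bet: "\<And>i j k x m. (i,j) \<in> Om \<Longrightarrow> k < gg C i j \<Longrightarrow> x \<in> Rij n cs i j \<Longrightarrow>
           m \<in> carrier (cmp A j) \<Longrightarrow> f i (bet A i j k x m) = bet B i j k x (f j m)"
  using assms unfolding is_hom_def by auto

lemma is_hom_comp:
  fixes A :: "('f::field, 'a) hmod"
  assumes f: "is_hom n C cs Om A B f" and g: "is_hom n C cs Om B D g"
    and Om: "Om \<subseteq> Iset n \<times> Iset n"
  shows "is_hom n C cs Om A D (\<lambda>i m. g i (f i m))"
proof (rule is_homI)
  fix i j k and x :: "'f fps" and m
  assume "(i,j) \<in> Om" "k < gg C i j" "x \<in> Rij n cs i j" "m \<in> carrier (cmp A j)"
  with Om show "g i (f i (bet A i j k x m)) = bet D i j k x (g j (f j m))"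
    by (auto simp: is_hom_bet[OF f] is_hom_bet[OF g] is_hom_closed[OF f])
qed (simp_all add: is_hom_closed[OF f] is_hom_closed[OF g] is_hom_add[OF f] is_hom_add[OF g]
    is_hom_smult[OF f] is_hom_smult[OF g])

lemma is_hom_cong:
  fixes A :: "('f::field, 'a) hmod"
  assumes f: "is_hom n C cs Om A B f" and A: "is_hmod n C cs Om A"
    and Om: "Om \<subseteq> Iset n \<times> Iset n"
    and eq: "\<And>i m. i \<in> Iset n \<Longrightarrow> m \<in> carrier (cmp A i) \<Longrightarrow> g i m = f i m"
  shows "is_hom n C cs Om A B g"
proof (rule is_homI)
  fix i assume i: "i \<in> Iset n"
  interpret Module.module fps_ring "cmp A i" using hmod_module_cmp[OF A i] .
  show "g i m \<in> carrier (cmp B i)" if "m \<in> carrier (cmp A i)" for m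
    using that i eq is_hom_closed[OF f] by simp
  show "g i (m \<oplus>\<^bsub>cmp A i\<^esub> m') = g i m \<oplus>\<^bsub>cmp B i\<^esub> g i m'"
    if "m \<in> carrier (cmp A i)" "m' \<in> carrier (cmp A i)" for m m'
    using that i eq is_hom_add[OF f] by simp
  show "g i (r \<odot>\<^bsub>cmp A i\<^esub> m) = r \<odot>\<^bsub>cmp B i\<^esub> g i m" if "m \<in> carrier (cmp A i)" for m r
    using that i eq is_hom_smult[OF f] by simp
next
  fix i j k and x :: "'f fps" and m
  assume ij: "(i,j) \<in> Om" and "k < gg C i j" "x \<in> Rij n cs i j" "m \<in> carrier (cmp A j)"
  moreover have "i \<in> Iset n" "j \<in> Iset n" using Om ij by auto
  ultimately show "g i (bet A i j k x m) = bet B i j k x (g j m)"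
    by (simp add: eq is_hom_bet[OF f] hmod_bet_closed[OF A])
qed

definition sub_prod_hmod ::
  "('f::field, 'a) hmod \<Rightarrow> ('f, 'b) hmod \<Rightarrow> (nat \<Rightarrow> ('a \<times> 'b) set) \<Rightarrow> ('f, 'a \<times> 'b) hmod" where
  "sub_prod_hmod N M S = \<lparr>cmp = (\<lambda>i. (prod_module (cmp N i) (cmp M i))\<lparr>carrier := S i\<rparr>),
     bet = (\<lambda>i j k x p. (bet N i j k x (fst p), bet M i j k x (snd p)))\<rparr>"

lemma sub_prod_hmod_simps [simp]:
  "carrier (cmp (sub_prod_hmod N M S) i) = S i"
  "zero (cmp (sub_prod_hmod N M S) i) = (\<zero>\<^bsub>cmp N i\<^esub>, \<zero>\<^bsub>cmp M i\<^esub>)"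
  "p \<oplus>\<^bsub>cmp (sub_prod_hmod N M S) i\<^esub> q = (fst p \<oplus>\<^bsub>cmp N i\<^esub> fst q, snd p \<oplus>\<^bsub>cmp M i\<^esub> snd q)"
  "r \<odot>\<^bsub>cmp (sub_prod_hmod N M S) i\<^esub> p = (r \<odot>\<^bsub>cmp N i\<^esub> fst p, r \<odot>\<^bsub>cmp M i\<^esub> snd p)"
  "bet (sub_prod_hmod N M S) i j k x p = (bet N i j k x (fst p), bet M i j k x (snd p))"
  by (simp_all add: sub_prod_hmod_def prod_module_def)

lemma is_hmod_sub_prod_hmod:
  fixes N :: "('f::field, 'a) hmod" and M :: "('f, 'b) hmod"
  assumes N: "is_hmod n C cs Om N" and M: "is_hmod n C cs Om M" and Om: "Om \<subseteq> Iset n \<times> Iset n"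
    and S: "\<And>i. i \<in> Iset n \<Longrightarrow> S i \<subseteq> carrier (cmp N i) \<times> carrier (cmp M i)"
    and zero: "\<And>i. i \<in> Iset n \<Longrightarrow> (\<zero>\<^bsub>cmp N i\<^esub>, \<zero>\<^bsub>cmp M i\<^esub>) \<in> S i"
    and add: "\<And>i p q. i \<in> Iset n \<Longrightarrow> p \<in> S i \<Longrightarrow> q \<in> S i \<Longrightarrow>
      (fst p \<oplus>\<^bsub>cmp N i\<^esub> fst q, snd p \<oplus>\<^bsub>cmp M i\<^esub> snd q) \<in> S i"
    and smult: "\<And>i r p. i \<in> Iset n \<Longrightarrow> p \<in> S i \<Longrightarrow> (r \<odot>\<^bsub>cmp N i\<^esub> fst p, r \<odot>\<^bsub>cmp M i\<^esub> snd p) \<in> S i"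
    and bet: "\<And>i j k x p. (i,j) \<in> Om \<Longrightarrow> k < gg C i j \<Longrightarrow> x \<in> Rij n cs i j \<Longrightarrow> p \<in> S j \<Longrightarrow>
      (bet N i j k x (fst p), bet M i j k x (snd p)) \<in> S i"
  shows "is_hmod n C cs Om (sub_prod_hmod N M S)"
proof (rule is_hmodI)
  fix i assume i: "i \<in> Iset n"
  show "Module.module fps_ring (cmp (sub_prod_hmod N M S) i)"
    using module_sub_prod_module[OF hmod_module_cmp[OF N i] hmod_module_cmp[OF M i] S[OF i] zero[OF i]]
      add[OF i] smult[OF i] by (simp add: sub_prod_hmod_def)
next
  have carrier: "fst p \<in> carrier (cmp N j)" "snd p \<in> carrier (cmp M j)"
    if "(i,j) \<in> Om" "p \<in> S j" for i j p
    using that Om S by fastforce+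
  fix i j k
  assume ij: "(i,j) \<in> Om" and k: "k < gg C i j"
  note N_arrow = hmod_arrow[OF N ij k] and M_arrow = hmod_arrow[OF M ij k]
  show "bet (sub_prod_hmod N M S) i j k x p \<in> carrier (cmp (sub_prod_hmod N M S) i)"
    if "x \<in> Rij n cs i j" "p \<in> carrier (cmp (sub_prod_hmod N M S) j)" for x p
    using that bet[OF ij k] by simp
  show "bet (sub_prod_hmod N M S) i j k (x + y) p =
      bet (sub_prod_hmod N M S) i j k x p \<oplus>\<^bsub>cmp (sub_prod_hmod N M S) i\<^esub> bet (sub_prod_hmod N M S) i j k y p"
    if "x \<in> Rij n cs i j" "y \<in> Rij n cs i j" "p \<in> carrier (cmp (sub_prod_hmod N M S) j)" for x y p
    using that carrier[OF ij] by (simp add: N_arrow M_arrow)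
  show "bet (sub_prod_hmod N M S) i j k x (p \<oplus>\<^bsub>cmp (sub_prod_hmod N M S) j\<^esub> q) =
      bet (sub_prod_hmod N M S) i j k x p \<oplus>\<^bsub>cmp (sub_prod_hmod N M S) i\<^esub> bet (sub_prod_hmod N M S) i j k x q"
    if "x \<in> Rij n cs i j" "p \<in> carrier (cmp (sub_prod_hmod N M S) j)"
      "q \<in> carrier (cmp (sub_prod_hmod N M S) j)" for x p q
    using that carrier[OF ij] by (simp add: N_arrow M_arrow)
  show "bet (sub_prod_hmod N M S) i j k (emb n cs i r * x) p =
      r \<odot>\<^bsub>cmp (sub_prod_hmod N M S) i\<^esub> bet (sub_prod_hmod N M S) i j k x p"
    if "x \<in> Rij n cs i j" "p \<in> carrier (cmp (sub_prod_hmod N M S) j)" for x p r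
    using that carrier[OF ij] by (simp add: N_arrow M_arrow)
  show "bet (sub_prod_hmod N M S) i j k (x * emb n cs j r) p =
      bet (sub_prod_hmod N M S) i j k x (r \<odot>\<^bsub>cmp (sub_prod_hmod N M S) j\<^esub> p)"
    if "x \<in> Rij n cs i j" "p \<in> carrier (cmp (sub_prod_hmod N M S) j)" for x p r
    using that carrier[OF ij] by (simp add: N_arrow M_arrow)
qed

lemma is_hom_fst_sub_prod_hmod:
  assumes "\<And>i. i \<in> Iset n \<Longrightarrow> S i \<subseteq> carrier (cmp N i) \<times> carrier (cmp M i)"
  shows "is_hom n C cs Om (sub_prod_hmod N M S) N (\<lambda>i p. fst p)"
  by (intro is_homI) (use assms in fastforce)+

lemma is_hom_snd_sub_prod_hmod:
  assumes "\<And>i. i \<in> Iset n \<Longrightarrow> S i \<subseteq> carrier (cmp N i) \<times> carrier (cmp M i)"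
  shows "is_hom n C cs Om (sub_prod_hmod N M S) M (\<lambda>i p. snd p)"
  by (intro is_homI) (use assms in fastforce)+

lemma is_hom_into_sub_prod_hmod:
  assumes f: "is_hom n C cs Om Q N f" and g: "is_hom n C cs Om Q M g"
    and S: "\<And>i q. i \<in> Iset n \<Longrightarrow> q \<in> carrier (cmp Q i) \<Longrightarrow> (f i q, g i q) \<in> S i"
  shows "is_hom n C cs Om Q (sub_prod_hmod N M S) (\<lambda>i q. (f i q, g i q))"
  by (intro is_homI) (simp_all add: S is_homD[OF f] is_homD[OF g])

definition transport_hmod ::
  "('f::field, 'a) hmod \<Rightarrow> (nat \<Rightarrow> 'b set) \<Rightarrow> (nat \<Rightarrow> 'b \<Rightarrow> 'a) \<Rightarrow> (nat \<Rightarrow> 'a \<Rightarrow> 'b) \<Rightarrow> ('f, 'b) hmod" where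
  "transport_hmod P X T T' = \<lparr>cmp = (\<lambda>i. transport_module (cmp P i) (X i) (T i) (T' i)),
     bet = (\<lambda>i j k x u. T' i (bet P i j k x (T j u)))\<rparr>"

lemma transport_hmod_simps [simp]:
  "carrier (cmp (transport_hmod P X T T') i) = X i"
  "u \<oplus>\<^bsub>cmp (transport_hmod P X T T') i\<^esub> v = T' i (T i u \<oplus>\<^bsub>cmp P i\<^esub> T i v)"
  "r \<odot>\<^bsub>cmp (transport_hmod P X T T') i\<^esub> u = T' i (r \<odot>\<^bsub>cmp P i\<^esub> T i u)"
  "bet (transport_hmod P X T T') i j k x u = T' i (bet P i j k x (T j u))"
  by (simp_all add: transport_hmod_def transport_module_def)

context
  fixes n C cs Om and P :: "('f::field, 'a) hmod" and X T T'
  assumes P: "is_hmod n C cs Om P" and Om: "Om \<subseteq> Iset n \<times> Iset n"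
    and inv: "\<forall>i\<in>Iset n. inverse_maps (X i) (carrier (cmp P i)) (T i) (T' i)"
begin

private lemma inv_simps:
  assumes "i \<in> Iset n"
  shows "\<And>u. u \<in> X i \<Longrightarrow> T i u \<in> carrier (cmp P i)" "\<And>u. u \<in> X i \<Longrightarrow> T' i (T i u) = u"
    "\<And>p. p \<in> carrier (cmp P i) \<Longrightarrow> T' i p \<in> X i" "\<And>p. p \<in> carrier (cmp P i) \<Longrightarrow> T i (T' i p) = p"
  using inv assms by (auto simp: inverse_maps_def)

lemma is_hmod_transport_hmod: "is_hmod n C cs Om (transport_hmod P X T T')"
proof (rule is_hmodI)
  fix i assume i: "i \<in> Iset n"
  then have "inverse_maps (X i) (carrier (cmp P i)) (T i) (T' i)" using inv by blast
  from module_transport_module[OF hmod_module_cmp[OF P i] this]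
  show "Module.module fps_ring (cmp (transport_hmod P X T T') i)" by (simp add: transport_hmod_def)
next
  fix i j k
  assume ij: "(i,j) \<in> Om" and k: "k < gg C i j"
  then have "i \<in> Iset n" "j \<in> Iset n" using Om by auto
  note simps = inv_simps[OF this(1)] inv_simps[OF this(2)] hmod_arrow[OF P ij k]
  interpret Pj: Module.module fps_ring "cmp P j" using hmod_module_cmp[OF P \<open>j \<in> Iset n\<close>] .
  show "bet (transport_hmod P X T T') i j k x u \<in> carrier (cmp (transport_hmod P X T T') i)"
    if "x \<in> Rij n cs i j" "u \<in> carrier (cmp (transport_hmod P X T T') j)" for x u
    using that by (simp add: simps)
  show "bet (transport_hmod P X T T') i j k (x + y) u =
      bet (transport_hmod P X T T') i j k x u \<oplus>\<^bsub>cmp (transport_hmod P X T T') i\<^esub>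
      bet (transport_hmod P X T T') i j k y u"
    if "x \<in> Rij n cs i j" "y \<in> Rij n cs i j" "u \<in> carrier (cmp (transport_hmod P X T T') j)" for x y u
    using that by (simp add: simps)
  show "bet (transport_hmod P X T T') i j k x (u \<oplus>\<^bsub>cmp (transport_hmod P X T T') j\<^esub> v) =
      bet (transport_hmod P X T T') i j k x u \<oplus>\<^bsub>cmp (transport_hmod P X T T') i\<^esub>
      bet (transport_hmod P X T T') i j k x v"
    if "x \<in> Rij n cs i j" "u \<in> carrier (cmp (transport_hmod P X T T') j)"
      "v \<in> carrier (cmp (transport_hmod P X T T') j)" for x u v
    using that by (simp add: simps)
  show "bet (transport_hmod P X T T') i j k (emb n cs i r * x) u =
      r \<odot>\<^bsub>cmp (transport_hmod P X T T') i\<^esub> bet (transport_hmod P X T T') i j k x u"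
    if "x \<in> Rij n cs i j" "u \<in> carrier (cmp (transport_hmod P X T T') j)" for x u r
    using that by (simp add: simps)
  show "bet (transport_hmod P X T T') i j k (x * emb n cs j r) u =
      bet (transport_hmod P X T T') i j k x (r \<odot>\<^bsub>cmp (transport_hmod P X T T') j\<^esub> u)"
    if "x \<in> Rij n cs i j" "u \<in> carrier (cmp (transport_hmod P X T T') j)" for x u r
    using that by (simp add: simps)
qed

lemma is_hom_to_transport_hmod:
  assumes h: "is_hom n C cs Om Q P h"
  shows "is_hom n C cs Om Q (transport_hmod P X T T') (\<lambda>i q. T' i (h i q))"
proof (rule is_homI)
  fix i j k and x :: "'f fps" and m
  assume "(i,j) \<in> Om" "k < gg C i j" "x \<in> Rij n cs i j" "m \<in> carrier (cmp Q j)"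
  moreover from this have "j \<in> Iset n" using Om by auto
  ultimately show "T' i (h i (bet Q i j k x m)) = bet (transport_hmod P X T T') i j k x (T' j (h j m))"
    by (simp add: inv_simps is_homD[OF h])
qed (simp_all add: inv_simps is_homD[OF h])

lemma is_hom_from_transport_hmod:
  assumes h: "is_hom n C cs Om P Q h"
  shows "is_hom n C cs Om (transport_hmod P X T T') Q (\<lambda>i u. h i (T i u))"
proof (rule is_homI)
  fix i assume i: "i \<in> Iset n"
  interpret Module.module fps_ring "cmp P i" using hmod_module_cmp[OF P i] .
  show "h i (T i u) \<in> carrier (cmp Q i)" if "u \<in> carrier (cmp (transport_hmod P X T T') i)" for u
    using that i by (simp add: inv_simps is_homD[OF h])
  show "h i (T i (u \<oplus>\<^bsub>cmp (transport_hmod P X T T') i\<^esub> v)) = h i (T i u) \<oplus>\<^bsub>cmp Q i\<^esub> h i (T i v)"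
    if "u \<in> carrier (cmp (transport_hmod P X T T') i)" "v \<in> carrier (cmp (transport_hmod P X T T') i)" for u v
    using that i by (simp add: inv_simps is_homD[OF h])
  show "h i (T i (r \<odot>\<^bsub>cmp (transport_hmod P X T T') i\<^esub> u)) = r \<odot>\<^bsub>cmp Q i\<^esub> h i (T i u)"
    if "u \<in> carrier (cmp (transport_hmod P X T T') i)" for u r
    using that i by (simp add: inv_simps is_homD[OF h])
next
  fix i j k and x :: "'f fps" and u
  assume ij: "(i,j) \<in> Om" and k: "k < gg C i j" and "x \<in> Rij n cs i j"
    and "u \<in> carrier (cmp (transport_hmod P X T T') j)"
  moreover from ij have "i \<in> Iset n" "j \<in> Iset n" using Om by auto
  ultimately show "h i (T i (bet (transport_hmod P X T T') i j k x u)) = bet Q i j k x (h j (T j u))"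
    by (simp add: inv_simps hmod_bet_closed[OF P ij k] is_homD[OF h])
qed

end

section \<open>Multiplication by \<open>\<epsilon>\<close> and reduction modulo \<open>\<epsilon>\<close>\<close>

lemma cartan_setup_Om_subset: "cartan_setup n C cs Om \<Longrightarrow> Om \<subseteq> Iset n \<times> Iset n"
  unfolding cartan_setup_def by (elim conjE)

lemma cartan_setup_cs_pos: "cartan_setup n C cs Om \<Longrightarrow> i \<in> Iset n \<Longrightarrow> 0 < cs i"
  unfolding cartan_setup_def by blast

lemma clcm_pos:
  assumes "cartan_setup n C cs Om"
  shows "0 < clcm n cs"
proof -
  have "0 \<notin> cs ` Iset n" using cartan_setup_cs_pos[OF assms] by fastforce
  then have "Lcm (cs ` Iset n) \<noteq> 0" by (simp add: Lcm_0_iff Iset_def)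
  then show ?thesis by (simp add: clcm_def)
qed

lemma cs_dvd_clcm: "i \<in> Iset n \<Longrightarrow> cs i dvd clcm n cs"
  unfolding clcm_def by (rule dvd_Lcm) simp

lemma emb_fps_X_power_cs:
  assumes "cartan_setup n C cs Om" and "i \<in> Iset n"
  shows "emb n cs i (fps_X ^ cs i) = (fps_X ^ clcm n cs :: 'f::field fps)"
proof -
  define d where "d = clcm n cs div cs i"
  have d: "d * cs i = clcm n cs"
    using cs_dvd_clcm[OF assms(2)] by (simp add: d_def)
  then have "0 < d" using clcm_pos[OF assms(1)] by (cases d) auto
  then have "emb n cs i (fps_X ^ cs i) = ((fps_X ^ d) ^ cs i :: 'f fps)"
    unfolding emb_def d_def[symmetric] by (intro fps_X_power_compose) simp
  also have "\<dots> = fps_X ^ clcm n cs" by (simp flip: power_mult add: d)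
  finally show ?thesis .
qed

lemma free_module_torsion_free:
  fixes Mi :: "('f::field fps, 'v) module"
  assumes free: "free_module Mi" and Mi: "Module.module fps_ring Mi"
    and m: "m \<in> carrier Mi" and r: "r \<noteq> 0" and rm: "r \<odot>\<^bsub>Mi\<^esub> m = \<zero>\<^bsub>Mi\<^esub>"
  shows "m = \<zero>\<^bsub>Mi\<^esub>"
proof -
  interpret Module.module fps_ring Mi by fact
  obtain B where B: "B \<subseteq> carrier Mi" and unique: "\<forall>m\<in>carrier Mi. \<exists>!c.
      finite {b\<in>B. c b \<noteq> 0} \<and> (\<forall>b. b \<notin> B \<longrightarrow> c b = 0) \<and>
      m = finsum Mi (\<lambda>b. c b \<odot>\<^bsub>Mi\<^esub> b) {b\<in>B. c b \<noteq> 0}"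
    using free unfolding free_module_def by blast
  define coord where "coord m c \<longleftrightarrow> finite {b\<in>B. c b \<noteq> 0} \<and> (\<forall>b. b \<notin> B \<longrightarrow> c b = 0) \<and>
      m = finsum Mi (\<lambda>b. c b \<odot>\<^bsub>Mi\<^esub> b) {b\<in>B. c b \<noteq> 0}" for m c
  obtain c where c: "coord m c" using unique m unfolding coord_def by blast
  have supp: "{b\<in>B. r * c b \<noteq> 0} = {b\<in>B. c b \<noteq> 0}" using r by simp
  have "\<zero>\<^bsub>Mi\<^esub> = r \<odot>\<^bsub>Mi\<^esub> finsum Mi (\<lambda>b. c b \<odot>\<^bsub>Mi\<^esub> b) {b\<in>B. c b \<noteq> 0}"
    using rm c by (simp add: coord_def)
  also have "\<dots> = finsum Mi (\<lambda>b. r \<odot>\<^bsub>Mi\<^esub> (c b \<odot>\<^bsub>Mi\<^esub> b)) {b\<in>B. c b \<noteq> 0}"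
    using c B by (intro finsum_smult_ldistr) (auto simp: coord_def)
  also have "\<dots> = finsum Mi (\<lambda>b. (r * c b) \<odot>\<^bsub>Mi\<^esub> b) {b\<in>B. r * c b \<noteq> 0}"
    unfolding supp using B
    by (intro finsum_cong') (auto simp: smult_assoc1[symmetric] fps_ring_def)
  finally have "coord \<zero>\<^bsub>Mi\<^esub> (\<lambda>b. r * c b)"
    using c unfolding coord_def supp by simp
  moreover have "coord \<zero>\<^bsub>Mi\<^esub> (\<lambda>_. 0)" by (simp add: coord_def)
  moreover have "\<exists>!c. coord \<zero>\<^bsub>Mi\<^esub> c" using unique unfolding coord_def by simp
  ultimately have "(\<lambda>b. r * c b) = (\<lambda>_. 0)" by blast
  then have "\<forall>b. c b = 0" using r by (simp add: fun_eq_iff)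
  then show ?thesis using c by (simp add: coord_def)
qed

lemma Red_carrier: "carrier (cmp (Red cs P) i) = ecoset cs P i ` carrier (cmp P i)"
  by (simp add: Red_def)

lemma Red_zero: "zero (cmp (Red cs P) i) = ecoset cs P i \<zero>\<^bsub>cmp P i\<^esub>"
  by (simp add: Red_def)

locale hmodule =
  fixes n :: nat and C :: "nat \<Rightarrow> nat \<Rightarrow> int" and cs :: "nat \<Rightarrow> nat"
    and Om :: "(nat \<times> nat) set" and P :: "('f::field, 'v) hmod"
  assumes cartan: "cartan_setup n C cs Om" and hmod: "is_hmod n C cs Om P"
begin

lemma Om_subset: "Om \<subseteq> Iset n \<times> Iset n"
  using cartan by (rule cartan_setup_Om_subset)

lemma module_cmp: "i \<in> Iset n \<Longrightarrow> Module.module fps_ring (cmp P i)"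
  using hmod by (rule hmod_module_cmp)

context
  fixes i assumes i: "i \<in> Iset n"
begin

interpretation Pi: Module.module fps_ring "cmp P i"
  using module_cmp[OF i] .

lemma eps_act_closed: "x \<in> carrier (cmp P i) \<Longrightarrow> eps_act cs P i x \<in> carrier (cmp P i)"
  by (simp add: eps_act_def)

lemma eps_act_add:
  "x \<in> carrier (cmp P i) \<Longrightarrow> y \<in> carrier (cmp P i) \<Longrightarrow>
   eps_act cs P i (x \<oplus>\<^bsub>cmp P i\<^esub> y) = eps_act cs P i x \<oplus>\<^bsub>cmp P i\<^esub> eps_act cs P i y"
  by (simp add: eps_act_def Pi.smult_r_distr)

lemma eps_act_neg:
  "x \<in> carrier (cmp P i) \<Longrightarrow> eps_act cs P i (\<ominus>\<^bsub>cmp P i\<^esub> x) = \<ominus>\<^bsub>cmp P i\<^esub> eps_act cs P i x"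
  by (simp add: eps_act_def Pi.smult_r_minus)

lemma eps_act_smult:
  assumes "x \<in> carrier (cmp P i)"
  shows "eps_act cs P i (r \<odot>\<^bsub>cmp P i\<^esub> x) = r \<odot>\<^bsub>cmp P i\<^esub> eps_act cs P i x"
proof -
  have "fps_X ^ cs i \<otimes>\<^bsub>fps_ring\<^esub> r = r \<otimes>\<^bsub>fps_ring\<^esub> fps_X ^ cs i"
    by (simp add: fps_ring_def mult.commute)
  then show ?thesis
    using assms by (simp add: eps_act_def Pi.smult_assoc1[symmetric])
qed

lemma ecoset_add_eps_act:
  assumes a: "a \<in> carrier (cmp P i)" and x: "x \<in> carrier (cmp P i)"
  shows "ecoset cs P i (a \<oplus>\<^bsub>cmp P i\<^esub> eps_act cs P i x) = ecoset cs P i a"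
proof (intro equalityI subsetI)
  fix y assume "y \<in> ecoset cs P i (a \<oplus>\<^bsub>cmp P i\<^esub> eps_act cs P i x)"
  then obtain z where z: "z \<in> carrier (cmp P i)"
    and "y = (a \<oplus>\<^bsub>cmp P i\<^esub> eps_act cs P i x) \<oplus>\<^bsub>cmp P i\<^esub> eps_act cs P i z"
    unfolding ecoset_def by blast
  then have "y = a \<oplus>\<^bsub>cmp P i\<^esub> eps_act cs P i (x \<oplus>\<^bsub>cmp P i\<^esub> z)"
    using a x by (simp add: eps_act_add eps_act_closed Pi.a_assoc)
  then show "y \<in> ecoset cs P i a" unfolding ecoset_def using x z by blast
next
  fix y assume "y \<in> ecoset cs P i a"
  then obtain z where z: "z \<in> carrier (cmp P i)" and "y = a \<oplus>\<^bsub>cmp P i\<^esub> eps_act cs P i z"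
    unfolding ecoset_def by blast
  then have "y = (a \<oplus>\<^bsub>cmp P i\<^esub> eps_act cs P i x) \<oplus>\<^bsub>cmp P i\<^esub>
      eps_act cs P i (\<ominus>\<^bsub>cmp P i\<^esub> x \<oplus>\<^bsub>cmp P i\<^esub> z)"
    using a x by (simp add: eps_act_add eps_act_neg eps_act_closed Pi.a_assoc Pi.r_neg2)
  then show "y \<in> ecoset cs P i (a \<oplus>\<^bsub>cmp P i\<^esub> eps_act cs P i x)"
    unfolding ecoset_def using x z by blast
qed

lemma ecoset_self: "a \<in> carrier (cmp P i) \<Longrightarrow> a \<in> ecoset cs P i a"
  unfolding ecoset_def by (rule CollectI, rule exI[of _ "\<zero>\<^bsub>cmp P i\<^esub>"]) (simp add: eps_act_def)

lemma ecoset_eq_iff: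
  assumes "a \<in> carrier (cmp P i)" and "b \<in> carrier (cmp P i)"
  shows "ecoset cs P i a = ecoset cs P i b \<longleftrightarrow>
    (\<exists>x\<in>carrier (cmp P i). b = a \<oplus>\<^bsub>cmp P i\<^esub> eps_act cs P i x)"
proof
  assume "ecoset cs P i a = ecoset cs P i b"
  then have "b \<in> ecoset cs P i a" using ecoset_self[OF assms(2)] by simp
  then show "\<exists>x\<in>carrier (cmp P i). b = a \<oplus>\<^bsub>cmp P i\<^esub> eps_act cs P i x"
    unfolding ecoset_def by blast
qed (use assms ecoset_add_eps_act in auto)

lemma rep_ecoset:
  assumes a: "a \<in> carrier (cmp P i)"
  shows rep_ecoset_closed: "rep (ecoset cs P i a) \<in> carrier (cmp P i)"
    and ecoset_rep_ecoset: "ecoset cs P i (rep (ecoset cs P i a)) = ecoset cs P i a"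
proof -
  have "rep (ecoset cs P i a) \<in> ecoset cs P i a"
    unfolding rep_def using ecoset_self[OF a] by (rule someI)
  then obtain x where x: "x \<in> carrier (cmp P i)"
    and rep: "rep (ecoset cs P i a) = a \<oplus>\<^bsub>cmp P i\<^esub> eps_act cs P i x"
    unfolding ecoset_def by blast
  show "rep (ecoset cs P i a) \<in> carrier (cmp P i)" using a x rep by (simp add: eps_act_closed)
  show "ecoset cs P i (rep (ecoset cs P i a)) = ecoset cs P i a"
    using a x rep by (simp add: ecoset_add_eps_act)
qed

lemma ecoset_add_cong:
  assumes "a \<in> carrier (cmp P i)" "a' \<in> carrier (cmp P i)" "b \<in> carrier (cmp P i)" "b' \<in> carrier (cmp P i)"
    and "ecoset cs P i a = ecoset cs P i a'" "ecoset cs P i b = ecoset cs P i b'"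
  shows "ecoset cs P i (a \<oplus>\<^bsub>cmp P i\<^esub> b) = ecoset cs P i (a' \<oplus>\<^bsub>cmp P i\<^esub> b')"
proof -
  obtain x y where "x \<in> carrier (cmp P i)" "a' = a \<oplus>\<^bsub>cmp P i\<^esub> eps_act cs P i x"
    and "y \<in> carrier (cmp P i)" "b' = b \<oplus>\<^bsub>cmp P i\<^esub> eps_act cs P i y"
    using assms ecoset_eq_iff by meson
  then have "a' \<oplus>\<^bsub>cmp P i\<^esub> b' = (a \<oplus>\<^bsub>cmp P i\<^esub> b) \<oplus>\<^bsub>cmp P i\<^esub> eps_act cs P i (x \<oplus>\<^bsub>cmp P i\<^esub> y)"
    using assms by (simp add: eps_act_add eps_act_closed Pi.a_ac)
  then show ?thesis
    using assms \<open>x \<in> _\<close> \<open>y \<in> _\<close> by (simp add: ecoset_add_eps_act)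
qed

lemma ecoset_smult_cong:
  assumes "a \<in> carrier (cmp P i)" "a' \<in> carrier (cmp P i)" "ecoset cs P i a = ecoset cs P i a'"
  shows "ecoset cs P i (r \<odot>\<^bsub>cmp P i\<^esub> a) = ecoset cs P i (r \<odot>\<^bsub>cmp P i\<^esub> a')"
proof -
  obtain x where "x \<in> carrier (cmp P i)" "a' = a \<oplus>\<^bsub>cmp P i\<^esub> eps_act cs P i x"
    using assms ecoset_eq_iff by meson
  then have "r \<odot>\<^bsub>cmp P i\<^esub> a' = (r \<odot>\<^bsub>cmp P i\<^esub> a) \<oplus>\<^bsub>cmp P i\<^esub> eps_act cs P i (r \<odot>\<^bsub>cmp P i\<^esub> x)"
    using assms by (simp add: eps_act_smult eps_act_closed Pi.smult_r_distr)
  then show ?thesis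
    using assms \<open>x \<in> _\<close> by (simp add: ecoset_add_eps_act)
qed

lemma Red_add:
  assumes "a \<in> carrier (cmp P i)" "b \<in> carrier (cmp P i)"
  shows "ecoset cs P i a \<oplus>\<^bsub>cmp (Red cs P) i\<^esub> ecoset cs P i b = ecoset cs P i (a \<oplus>\<^bsub>cmp P i\<^esub> b)"
proof -
  have "ecoset cs P i (rep (ecoset cs P i a) \<oplus>\<^bsub>cmp P i\<^esub> rep (ecoset cs P i b)) =
      ecoset cs P i (a \<oplus>\<^bsub>cmp P i\<^esub> b)"
    using assms by (intro ecoset_add_cong) (simp_all add: rep_ecoset_closed ecoset_rep_ecoset)
  then show ?thesis by (simp add: Red_def)
qed

lemma Red_smult:
  assumes "a \<in> carrier (cmp P i)"
  shows "r \<odot>\<^bsub>cmp (Red cs P) i\<^esub> ecoset cs P i a = ecoset cs P i (r \<odot>\<^bsub>cmp P i\<^esub> a)"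
proof -
  have "ecoset cs P i (r \<odot>\<^bsub>cmp P i\<^esub> rep (ecoset cs P i a)) = ecoset cs P i (r \<odot>\<^bsub>cmp P i\<^esub> a)"
    using assms by (intro ecoset_smult_cong) (simp_all add: rep_ecoset_closed ecoset_rep_ecoset)
  then show ?thesis by (simp add: Red_def)
qed

end

context
  fixes i j k and x :: "'f fps"
  assumes ij: "(i,j) \<in> Om" and k: "k < gg C i j" and x: "x \<in> Rij n cs i j"
begin

private lemma arrow_ends: "i \<in> Iset n" "j \<in> Iset n"
  using ij Om_subset by auto

text \<open>\<open>\<epsilon>\<close> is central: \<open>\<epsilon>\<^sub>i\<^bsup>c\<^sub>i\<^esup> = \<epsilon> = \<epsilon>\<^sub>j\<^bsup>c\<^sub>j\<^esup>\<close> in \<open>F[[\<epsilon>\<^sub>i, \<epsilon>\<^sub>j]]\<close>.\<close>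
lemma bet_eps_act:
  assumes y: "y \<in> carrier (cmp P j)"
  shows "bet P i j k x (eps_act cs P j y) = eps_act cs P i (bet P i j k x y)"
proof -
  have "bet P i j k x (eps_act cs P j y) = bet P i j k (x * emb n cs j (fps_X ^ cs j)) y"
    unfolding eps_act_def using hmod_bet_emb_right[OF hmod ij k x y] by simp
  also have "\<dots> = bet P i j k (emb n cs i (fps_X ^ cs i) * x) y"
    by (simp add: emb_fps_X_power_cs[OF cartan arrow_ends(1)]
        emb_fps_X_power_cs[OF cartan arrow_ends(2)] mult.commute)
  also have "\<dots> = eps_act cs P i (bet P i j k x y)"
    unfolding eps_act_def using hmod_bet_emb_left[OF hmod ij k x y] by simp
  finally show ?thesis .
qed

lemma bet_zero: "bet P i j k x \<zero>\<^bsub>cmp P j\<^esub> = \<zero>\<^bsub>cmp P i\<^esub>"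
proof -
  interpret Pi: Module.module fps_ring "cmp P i" using module_cmp[OF arrow_ends(1)] .
  interpret Pj: Module.module fps_ring "cmp P j" using module_cmp[OF arrow_ends(2)] .
  have "bet P i j k x \<zero>\<^bsub>cmp P j\<^esub> \<oplus>\<^bsub>cmp P i\<^esub> bet P i j k x \<zero>\<^bsub>cmp P j\<^esub> = bet P i j k x \<zero>\<^bsub>cmp P j\<^esub>"
    using hmod_bet_add_right[OF hmod ij k x, of "\<zero>\<^bsub>cmp P j\<^esub>" "\<zero>\<^bsub>cmp P j\<^esub>"] by simp
  then show ?thesis
    using hmod_bet_closed[OF hmod ij k x Pj.zero_closed] by (simp add: Pi.add.l_cancel_one')
qed

lemma ecoset_bet_cong:
  assumes a: "a \<in> carrier (cmp P j)" and a': "a' \<in> carrier (cmp P j)"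
    and eq: "ecoset cs P j a = ecoset cs P j a'"
  shows "ecoset cs P i (bet P i j k x a) = ecoset cs P i (bet P i j k x a')"
proof -
  obtain y where y: "y \<in> carrier (cmp P j)" and a': "a' = a \<oplus>\<^bsub>cmp P j\<^esub> eps_act cs P j y"
    using ecoset_eq_iff[OF arrow_ends(2) a a'] eq by blast
  then have "bet P i j k x a' = bet P i j k x a \<oplus>\<^bsub>cmp P i\<^esub> eps_act cs P i (bet P i j k x y)"
    using a by (simp add: hmod_bet_add_right[OF hmod ij k x] eps_act_closed[OF arrow_ends(2)]
        bet_eps_act)
  then show ?thesis
    using a y by (simp add: ecoset_add_eps_act[OF arrow_ends(1)] hmod_bet_closed[OF hmod ij k x])
qed

lemma Red_bet:
  assumes a: "a \<in> carrier (cmp P j)"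
  shows "bet (Red cs P) i j k x (ecoset cs P j a) = ecoset cs P i (bet P i j k x a)"
  using ecoset_bet_cong[OF rep_ecoset_closed[OF arrow_ends(2) a] a ecoset_rep_ecoset[OF arrow_ends(2) a]]
  by (simp add: Red_def)

end

lemma is_hom_eps_act: "is_hom n C cs Om P P (eps_act cs P)"
  by (intro is_homI) (simp_all add: eps_act_closed eps_act_add eps_act_smult bet_eps_act)

lemma is_hom_zero: "is_hom n C cs Om Q P (\<lambda>i _. \<zero>\<^bsub>cmp P i\<^esub>)"
proof (rule is_homI)
  fix i assume "i \<in> Iset n"
  then interpret Module.module fps_ring "cmp P i" by (rule module_cmp)
  show "\<zero>\<^bsub>cmp P i\<^esub> \<in> carrier (cmp P i)" "\<zero>\<^bsub>cmp P i\<^esub> = \<zero>\<^bsub>cmp P i\<^esub> \<oplus>\<^bsub>cmp P i\<^esub> \<zero>\<^bsub>cmp P i\<^esub>"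
    "\<zero>\<^bsub>cmp P i\<^esub> = r \<odot>\<^bsub>cmp P i\<^esub> \<zero>\<^bsub>cmp P i\<^esub>" for r
    by simp_all
qed (simp add: bet_zero)

end

definition eps_div :: "(nat \<Rightarrow> nat) \<Rightarrow> ('f::field, 'v) hmod \<Rightarrow> nat \<Rightarrow> 'v \<Rightarrow> 'v" where
  "eps_div cs P i y = (THE x. x \<in> carrier (cmp P i) \<and> eps_act cs P i x = y)"

locale locally_free_hmodule = hmodule n C cs Om P
  for n C cs Om and P :: "('f::field, 'v) hmod" +
  assumes locally_free: "locally_free n P"
begin

lemma eps_act_inj:
  assumes i: "i \<in> Iset n" and x: "x \<in> carrier (cmp P i)" and y: "y \<in> carrier (cmp P i)"
    and eq: "eps_act cs P i x = eps_act cs P i y"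
  shows "x = y"
proof -
  interpret Pi: Module.module fps_ring "cmp P i" using module_cmp[OF i] .
  have eps_diff: "fps_X ^ cs i \<odot>\<^bsub>cmp P i\<^esub> (x \<ominus>\<^bsub>cmp P i\<^esub> y) = \<zero>\<^bsub>cmp P i\<^esub>"
    using x y eq eps_act_add[OF i] eps_act_neg[OF i]
    by (simp add: eps_act_def Pi.r_neg a_minus_def)
  have free: "free_module (cmp P i)" using locally_free i by (simp add: locally_free_def)
  have "x \<ominus>\<^bsub>cmp P i\<^esub> y = \<zero>\<^bsub>cmp P i\<^esub>"
    by (rule free_module_torsion_free[OF free module_cmp[OF i] _ _ eps_diff]) (simp_all add: x y)
  then show ?thesis using x y by (simp add: Pi.minus_eq Pi.add.inv_solve_right')
qed

lemma eps_div_eps_act: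
  "i \<in> Iset n \<Longrightarrow> x \<in> carrier (cmp P i) \<Longrightarrow> eps_div cs P i (eps_act cs P i x) = x"
  unfolding eps_div_def by (rule the_equality) (auto dest: eps_act_inj)

lemma hom_factors_through_eps:
  fixes Q :: "('f, 'w) hmod"
  assumes Q: "is_hmod n C cs Om Q" and f: "is_hom n C cs Om Q P f"
    and divisible: "\<And>i m. i \<in> Iset n \<Longrightarrow> m \<in> carrier (cmp Q i) \<Longrightarrow>
      \<exists>y\<in>carrier (cmp P i). f i m = eps_act cs P i y"
  shows "\<exists>g. is_hom n C cs Om Q P g \<and>
    (\<forall>i\<in>Iset n. \<forall>m\<in>carrier (cmp Q i). f i m = eps_act cs P i (g i m))"
proof -
  define g where "g i m = eps_div cs P i (f i m)" for i m
  have g: "g i m \<in> carrier (cmp P i)" "eps_act cs P i (g i m) = f i m"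
    if "i \<in> Iset n" "m \<in> carrier (cmp Q i)" for i m
    using divisible[OF that] eps_div_eps_act[OF that(1)] unfolding g_def by auto
  have "is_hom n C cs Om Q P g"
  proof (rule is_homI)
    fix i assume i: "i \<in> Iset n"
    interpret Qi: Module.module fps_ring "cmp Q i" using hmod_module_cmp[OF Q i] .
    interpret Pi: Module.module fps_ring "cmp P i" using module_cmp[OF i] .
    show "g i m \<in> carrier (cmp P i)" if "m \<in> carrier (cmp Q i)" for m
      using g that i by blast
    show "g i (m \<oplus>\<^bsub>cmp Q i\<^esub> m') = g i m \<oplus>\<^bsub>cmp P i\<^esub> g i m'"
      if "m \<in> carrier (cmp Q i)" "m' \<in> carrier (cmp Q i)" for m m'
      by (rule eps_act_inj[OF i]) (use that i g in \<open>simp_all add: eps_act_add is_hom_add[OF f]\<close>)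
    show "g i (r \<odot>\<^bsub>cmp Q i\<^esub> m) = r \<odot>\<^bsub>cmp P i\<^esub> g i m" if "m \<in> carrier (cmp Q i)" for m r
      by (rule eps_act_inj[OF i]) (use that i g in \<open>simp_all add: eps_act_smult is_hom_smult[OF f]\<close>)
  next
    fix i j k and x :: "'f fps" and m
    assume ij: "(i,j) \<in> Om" and k: "k < gg C i j" and x: "x \<in> Rij n cs i j"
      and m: "m \<in> carrier (cmp Q j)"
    have i: "i \<in> Iset n" and j: "j \<in> Iset n" using ij Om_subset by auto
    have eps_bet_g: "eps_act cs P i (bet P i j k x (g j m)) = bet P i j k x (f j m)"
      using g j m by (simp flip: bet_eps_act[OF ij k x])
    show "g i (bet Q i j k x m) = bet P i j k x (g j m)"
      by (rule eps_act_inj[OF i])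
        (use g i j m eps_bet_g in \<open>simp_all add: is_hom_bet[OF f ij k x m]
          hmod_bet_closed[OF Q ij k x] hmod_bet_closed[OF hmod ij k x]\<close>)
  qed
  then show ?thesis using g by metis
qed

end

lemma is_hom_eps_act_commute:
  "is_hom n C cs Om A B f \<Longrightarrow> i \<in> Iset n \<Longrightarrow> w \<in> carrier (cmp A i) \<Longrightarrow>
   f i (eps_act cs A i w) = eps_act cs B i (f i w)"
  by (simp add: eps_act_def is_hom_smult)

section \<open>Homomorphisms between reductions\<close>

locale hmodule_pair =
  M: hmodule n C cs Om M + N: locally_free_hmodule n C cs Om N
  for n C cs Om and M :: "('f::field, 'm) hmod" and N :: "('f, 'n) hmod"
begin

lemma red_hom_ecoset:
  assumes f: "is_hom n C cs Om M N f" and i: "i \<in> Iset n" and m: "m \<in> carrier (cmp M i)"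
  shows "red_hom cs N f i (ecoset cs M i m) = ecoset cs N i (f i m)"
proof -
  interpret Mi: Module.module fps_ring "cmp M i" using M.module_cmp[OF i] .
  obtain w where w: "w \<in> carrier (cmp M i)" and rep: "rep (ecoset cs M i m) = m \<oplus>\<^bsub>cmp M i\<^esub> eps_act cs M i w"
    using M.ecoset_eq_iff[OF i m M.rep_ecoset_closed[OF i m]] M.ecoset_rep_ecoset[OF i m] by metis
  have "f i (rep (ecoset cs M i m)) = f i m \<oplus>\<^bsub>cmp N i\<^esub> eps_act cs N i (f i w)"
    using m w i by (simp add: rep is_hom_add[OF f] is_hom_eps_act_commute[OF f] M.eps_act_closed)
  then show ?thesis
    unfolding red_hom_def using m w i by (simp add: N.ecoset_add_eps_act is_hom_closed[OF f])
qed

lemma red_hom_eq_zero_imp_eps_factor: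
  assumes f: "is_hom n C cs Om M N f"
    and zero: "\<forall>i\<in>Iset n. \<forall>A\<in>carrier (cmp (Red cs M) i). red_hom cs N f i A = zero (cmp (Red cs N) i)"
  shows "\<exists>g. is_hom n C cs Om M N g \<and>
    (\<forall>i\<in>Iset n. \<forall>m\<in>carrier (cmp M i). f i m = eps_act cs N i (g i m))"
proof (rule N.hom_factors_through_eps[OF M.hmod f])
  fix i m assume i: "i \<in> Iset n" and m: "m \<in> carrier (cmp M i)"
  interpret Ni: Module.module fps_ring "cmp N i" using N.module_cmp[OF i] .
  have "ecoset cs N i \<zero>\<^bsub>cmp N i\<^esub> = ecoset cs N i (f i m)"
    using zero i m red_hom_ecoset[OF f i m] by (simp add: Red_carrier Red_zero)
  then obtain y where "y \<in> carrier (cmp N i)" "f i m = \<zero>\<^bsub>cmp N i\<^esub> \<oplus>\<^bsub>cmp N i\<^esub> eps_act cs N i y"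
    using N.ecoset_eq_iff[OF i] is_hom_closed[OF f i m] by blast
  then show "\<exists>y\<in>carrier (cmp N i). f i m = eps_act cs N i y"
    using i by (auto simp: N.eps_act_closed)
qed

lemma red_hom_zero:
  assumes \<phi>: "is_hom n C cs Om (Red cs M) (Red cs N) \<phi>" and i: "i \<in> Iset n"
  shows "\<phi> i (ecoset cs M i \<zero>\<^bsub>cmp M i\<^esub>) = ecoset cs N i \<zero>\<^bsub>cmp N i\<^esub>"
proof -
  interpret Mi: Module.module fps_ring "cmp M i" using M.module_cmp[OF i] .
  interpret Ni: Module.module fps_ring "cmp N i" using N.module_cmp[OF i] .
  have zero: "ecoset cs M i \<zero>\<^bsub>cmp M i\<^esub> \<in> carrier (cmp (Red cs M) i)"
    by (simp add: Red_carrier)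
  then obtain a where a: "a \<in> carrier (cmp N i)" "\<phi> i (ecoset cs M i \<zero>\<^bsub>cmp M i\<^esub>) = ecoset cs N i a"
    using is_hom_closed[OF \<phi> i] Red_carrier[of cs N i] by blast
  have "\<phi> i (ecoset cs M i \<zero>\<^bsub>cmp M i\<^esub>) = \<phi> i (\<zero>\<^bsub>fps_ring\<^esub> \<odot>\<^bsub>cmp (Red cs M) i\<^esub> ecoset cs M i \<zero>\<^bsub>cmp M i\<^esub>)"
    by (simp add: M.Red_smult[OF i])
  also have "\<dots> = \<zero>\<^bsub>fps_ring\<^esub> \<odot>\<^bsub>cmp (Red cs N) i\<^esub> ecoset cs N i a"
    using is_hom_smult[OF \<phi> i zero] a(2) by simp
  also have "\<dots> = ecoset cs N i \<zero>\<^bsub>cmp N i\<^esub>"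
    using a(1) by (simp add: N.Red_smult[OF i])
  finally show ?thesis .
qed

lemma red_hom_set_lift:
  assumes \<phi>: "is_hom n C cs Om (Red cs M) (Red cs N) \<phi>"
  obtains \<psi> where "\<And>i. i \<in> Iset n \<Longrightarrow> \<psi> i \<zero>\<^bsub>cmp M i\<^esub> = \<zero>\<^bsub>cmp N i\<^esub>"
    and "\<And>i b. i \<in> Iset n \<Longrightarrow> b \<in> carrier (cmp M i) \<Longrightarrow> \<psi> i b \<in> carrier (cmp N i)"
    and "\<And>i b. i \<in> Iset n \<Longrightarrow> b \<in> carrier (cmp M i) \<Longrightarrow>
      ecoset cs N i (\<psi> i b) = \<phi> i (ecoset cs M i b)"
proof -
  define \<psi> where
    "\<psi> i b = (if b = \<zero>\<^bsub>cmp M i\<^esub> then \<zero>\<^bsub>cmp N i\<^esub> else rep (\<phi> i (ecoset cs M i b)))" for i b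
  have lift: "\<psi> i b \<in> carrier (cmp N i) \<and> ecoset cs N i (\<psi> i b) = \<phi> i (ecoset cs M i b)"
    if i: "i \<in> Iset n" and b: "b \<in> carrier (cmp M i)" for i b
  proof -
    interpret Ni: Module.module fps_ring "cmp N i" using N.module_cmp[OF i] .
    obtain a where a: "a \<in> carrier (cmp N i)" "\<phi> i (ecoset cs M i b) = ecoset cs N i a"
      using b is_hom_closed[OF \<phi> i] Red_carrier[of cs M i] Red_carrier[of cs N i] by blast
    then show ?thesis
      using red_hom_zero[OF \<phi> i] by (auto simp: \<psi>_def N.rep_ecoset_closed[OF i] N.ecoset_rep_ecoset[OF i])
  qed
  show thesis by (rule that[of \<psi>]) (simp_all add: lift, simp add: \<psi>_def)
qed

end

locale lifted_red_hom = hmodule_pair n C cs Om M N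
  for n C cs Om and M :: "('f::field, 'm) hmod" and N :: "('f, 'n) hmod" +
  fixes \<phi> :: "nat \<Rightarrow> 'm set \<Rightarrow> 'n set" and \<psi> :: "nat \<Rightarrow> 'm \<Rightarrow> 'n"
  assumes phi_hom: "is_hom n C cs Om (Red cs M) (Red cs N) \<phi>"
    and lift_zero: "i \<in> Iset n \<Longrightarrow> \<psi> i \<zero>\<^bsub>cmp M i\<^esub> = \<zero>\<^bsub>cmp N i\<^esub>"
    and lift_closed: "i \<in> Iset n \<Longrightarrow> b \<in> carrier (cmp M i) \<Longrightarrow> \<psi> i b \<in> carrier (cmp N i)"
    and lift_ecoset: "i \<in> Iset n \<Longrightarrow> b \<in> carrier (cmp M i) \<Longrightarrow>
      ecoset cs N i (\<psi> i b) = \<phi> i (ecoset cs M i b)"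
begin

lemma ecoset_lift_add:
  assumes i: "i \<in> Iset n" and b: "b \<in> carrier (cmp M i)" and b': "b' \<in> carrier (cmp M i)"
  shows "ecoset cs N i (\<psi> i (b \<oplus>\<^bsub>cmp M i\<^esub> b')) = ecoset cs N i (\<psi> i b \<oplus>\<^bsub>cmp N i\<^esub> \<psi> i b')"
proof -
  interpret Mi: Module.module fps_ring "cmp M i" using M.module_cmp[OF i] .
  have "ecoset cs N i (\<psi> i (b \<oplus>\<^bsub>cmp M i\<^esub> b')) =
      \<phi> i (ecoset cs M i b \<oplus>\<^bsub>cmp (Red cs M) i\<^esub> ecoset cs M i b')"
    using b b' by (simp add: lift_ecoset[OF i] M.Red_add[OF i])
  also have "\<dots> = ecoset cs N i (\<psi> i b) \<oplus>\<^bsub>cmp (Red cs N) i\<^esub> ecoset cs N i (\<psi> i b')"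
    using b b' is_hom_add[OF phi_hom i] by (simp add: Red_carrier lift_ecoset[OF i])
  also have "\<dots> = ecoset cs N i (\<psi> i b \<oplus>\<^bsub>cmp N i\<^esub> \<psi> i b')"
    using b b' by (simp add: N.Red_add[OF i] lift_closed[OF i])
  finally show ?thesis .
qed

lemma ecoset_lift_smult:
  assumes i: "i \<in> Iset n" and b: "b \<in> carrier (cmp M i)"
  shows "ecoset cs N i (\<psi> i (r \<odot>\<^bsub>cmp M i\<^esub> b)) = ecoset cs N i (r \<odot>\<^bsub>cmp N i\<^esub> \<psi> i b)"
proof -
  interpret Mi: Module.module fps_ring "cmp M i" using M.module_cmp[OF i] .
  have "ecoset cs N i (\<psi> i (r \<odot>\<^bsub>cmp M i\<^esub> b)) = \<phi> i (r \<odot>\<^bsub>cmp (Red cs M) i\<^esub> ecoset cs M i b)"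
    using b by (simp add: lift_ecoset[OF i] M.Red_smult[OF i])
  also have "\<dots> = r \<odot>\<^bsub>cmp (Red cs N) i\<^esub> ecoset cs N i (\<psi> i b)"
    using b is_hom_smult[OF phi_hom i] by (simp add: Red_carrier lift_ecoset[OF i])
  also have "\<dots> = ecoset cs N i (r \<odot>\<^bsub>cmp N i\<^esub> \<psi> i b)"
    using b by (simp add: N.Red_smult[OF i] lift_closed[OF i])
  finally show ?thesis .
qed

lemma ecoset_lift_bet:
  assumes ij: "(i,j) \<in> Om" and k: "k < gg C i j" and x: "x \<in> Rij n cs i j"
    and b: "b \<in> carrier (cmp M j)"
  shows "ecoset cs N i (\<psi> i (bet M i j k x b)) = ecoset cs N i (bet N i j k x (\<psi> j b))"
proof -
  have i: "i \<in> Iset n" and j: "j \<in> Iset n" using ij M.Om_subset by auto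
  have "ecoset cs N i (\<psi> i (bet M i j k x b)) = \<phi> i (bet (Red cs M) i j k x (ecoset cs M j b))"
    using b by (simp add: lift_ecoset[OF i] M.Red_bet[OF ij k x] hmod_bet_closed[OF M.hmod ij k x])
  also have "\<dots> = bet (Red cs N) i j k x (ecoset cs N j (\<psi> j b))"
    using b is_hom_bet[OF phi_hom ij k x] by (simp add: Red_carrier lift_ecoset[OF j])
  also have "\<dots> = ecoset cs N i (bet N i j k x (\<psi> j b))"
    using b by (simp add: N.Red_bet[OF ij k x] lift_closed[OF j])
  finally show ?thesis .
qed

definition pullback :: "nat \<Rightarrow> ('n \<times> 'm) set" where
  "pullback i = {p \<in> carrier (cmp N i) \<times> carrier (cmp M i).
     ecoset cs N i (fst p) = ecoset cs N i (\<psi> i (snd p))}"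

lemma mem_pullback:
  "p \<in> pullback i \<longleftrightarrow> fst p \<in> carrier (cmp N i) \<and> snd p \<in> carrier (cmp M i) \<and>
     ecoset cs N i (fst p) = ecoset cs N i (\<psi> i (snd p))"
  by (simp add: pullback_def mem_Times_iff)

lemma pullback_subset: "pullback i \<subseteq> carrier (cmp N i) \<times> carrier (cmp M i)"
  by (auto simp: pullback_def)

lemma is_hmod_pullback: "is_hmod n C cs Om (sub_prod_hmod N M pullback)"
proof (rule is_hmod_sub_prod_hmod[OF N.hmod M.hmod M.Om_subset])
  fix i assume i: "i \<in> Iset n"
  interpret Mi: Module.module fps_ring "cmp M i" using M.module_cmp[OF i] .
  interpret Ni: Module.module fps_ring "cmp N i" using N.module_cmp[OF i] .
  show "pullback i \<subseteq> carrier (cmp N i) \<times> carrier (cmp M i)"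
    by (rule pullback_subset)
  show "(\<zero>\<^bsub>cmp N i\<^esub>, \<zero>\<^bsub>cmp M i\<^esub>) \<in> pullback i"
    by (simp add: mem_pullback lift_zero[OF i])
  show "(fst p \<oplus>\<^bsub>cmp N i\<^esub> fst q, snd p \<oplus>\<^bsub>cmp M i\<^esub> snd q) \<in> pullback i"
    if "p \<in> pullback i" "q \<in> pullback i" for p q
  proof -
    note p = that(1)[unfolded mem_pullback] and q = that(2)[unfolded mem_pullback]
    have "ecoset cs N i (fst p \<oplus>\<^bsub>cmp N i\<^esub> fst q) = ecoset cs N i (\<psi> i (snd p) \<oplus>\<^bsub>cmp N i\<^esub> \<psi> i (snd q))"
      using p q by (intro N.ecoset_add_cong[OF i]) (simp_all add: lift_closed[OF i])
    also have "\<dots> = ecoset cs N i (\<psi> i (snd p \<oplus>\<^bsub>cmp M i\<^esub> snd q))"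
      using p q by (simp add: ecoset_lift_add[OF i])
    finally show ?thesis using p q by (simp add: mem_pullback)
  qed
  show "(r \<odot>\<^bsub>cmp N i\<^esub> fst p, r \<odot>\<^bsub>cmp M i\<^esub> snd p) \<in> pullback i"
    if "p \<in> pullback i" for r p
  proof -
    note p = that[unfolded mem_pullback]
    have "ecoset cs N i (r \<odot>\<^bsub>cmp N i\<^esub> fst p) = ecoset cs N i (r \<odot>\<^bsub>cmp N i\<^esub> \<psi> i (snd p))"
      using p by (intro N.ecoset_smult_cong[OF i]) (simp_all add: lift_closed[OF i])
    also have "\<dots> = ecoset cs N i (\<psi> i (r \<odot>\<^bsub>cmp M i\<^esub> snd p))"
      using p by (simp add: ecoset_lift_smult[OF i])
    finally show ?thesis using p by (simp add: mem_pullback)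
  qed
next
  fix i j k and x :: "'f fps" and p
  assume ij: "(i,j) \<in> Om" and k: "k < gg C i j" and x: "x \<in> Rij n cs i j" and "p \<in> pullback j"
  note p = this(4)[unfolded mem_pullback]
  have j: "j \<in> Iset n" using ij M.Om_subset by auto
  have "ecoset cs N i (bet N i j k x (fst p)) = ecoset cs N i (bet N i j k x (\<psi> j (snd p)))"
    using p by (intro N.ecoset_bet_cong[OF ij k x]) (simp_all add: lift_closed[OF j])
  also have "\<dots> = ecoset cs N i (\<psi> i (bet M i j k x (snd p)))"
    using p by (simp add: ecoset_lift_bet[OF ij k x])
  finally show "(bet N i j k x (fst p), bet M i j k x (snd p)) \<in> pullback i"
    using p by (simp add: mem_pullback hmod_bet_closed[OF N.hmod ij k x] hmod_bet_closed[OF M.hmod ij k x])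
qed

definition to_pullback :: "nat \<Rightarrow> 'n \<times> 'm \<Rightarrow> 'n \<times> 'm" where
  "to_pullback i p = (\<psi> i (snd p) \<oplus>\<^bsub>cmp N i\<^esub> eps_act cs N i (fst p), snd p)"

definition from_pullback :: "nat \<Rightarrow> 'n \<times> 'm \<Rightarrow> 'n \<times> 'm" where
  "from_pullback i p = (eps_div cs N i (fst p \<ominus>\<^bsub>cmp N i\<^esub> \<psi> i (snd p)), snd p)"

lemma inverse_maps_pullback:
  assumes i: "i \<in> Iset n"
  shows "inverse_maps (carrier (cmp N i) \<times> carrier (cmp M i)) (pullback i) (to_pullback i) (from_pullback i)"
proof -
  interpret Ni: Module.module fps_ring "cmp N i" using N.module_cmp[OF i] .
  have cancel: "(u \<oplus>\<^bsub>cmp N i\<^esub> v) \<ominus>\<^bsub>cmp N i\<^esub> u = v"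
    if "u \<in> carrier (cmp N i)" "v \<in> carrier (cmp N i)" for u v
    using that by (simp add: Ni.minus_eq Ni.add.inv_solve_right' Ni.a_comm Ni.r_neg1)
  have "to_pullback i (x, b) \<in> pullback i \<and> from_pullback i (to_pullback i (x, b)) = (x, b)"
    if x: "x \<in> carrier (cmp N i)" and b: "b \<in> carrier (cmp M i)" for x b
    using x b by (simp add: to_pullback_def from_pullback_def mem_pullback cancel lift_closed[OF i]
        N.eps_act_closed[OF i] N.ecoset_add_eps_act[OF i] N.eps_div_eps_act[OF i])
  moreover have "from_pullback i (a, b) \<in> carrier (cmp N i) \<times> carrier (cmp M i) \<and>
      to_pullback i (from_pullback i (a, b)) = (a, b)"
    if "(a, b) \<in> pullback i" for a b
  proof -
    have a: "a \<in> carrier (cmp N i)" and b: "b \<in> carrier (cmp M i)"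
      and "ecoset cs N i (\<psi> i b) = ecoset cs N i a"
      using that by (simp_all add: mem_pullback)
    then obtain y where y: "y \<in> carrier (cmp N i)" and a_eq: "a = \<psi> i b \<oplus>\<^bsub>cmp N i\<^esub> eps_act cs N i y"
      using N.ecoset_eq_iff[OF i lift_closed[OF i b] a] by blast
    then show ?thesis
      using b by (simp add: to_pullback_def from_pullback_def cancel lift_closed[OF i]
          N.eps_act_closed[OF i] N.eps_div_eps_act[OF i])
  qed
  ultimately show ?thesis unfolding inverse_maps_def by auto
qed

text \<open>The pullback of \<open>N \<rightarrow> Red N\<close> along \<open>\<phi>\<close>, identified with \<open>N \<times> M\<close> so that the
  extension \<open>0 \<rightarrow> N \<rightarrow> E \<rightarrow> M \<rightarrow> 0\<close> takes the standard form of \<^const>\<open>ext1_zero\<close>;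
  \<open>\<psi> 0 = 0\<close> makes the inclusion exactly \<open>x \<mapsto> (x, 0)\<close>.\<close>
definition extension :: "('f, 'n \<times> 'm) hmod" where
  "extension = transport_hmod (sub_prod_hmod N M pullback)
     (\<lambda>i. carrier (cmp N i) \<times> carrier (cmp M i)) to_pullback from_pullback"

lemma inverse_maps_extension:
  "\<forall>i\<in>Iset n. inverse_maps (carrier (cmp N i) \<times> carrier (cmp M i))
     (carrier (cmp (sub_prod_hmod N M pullback) i)) (to_pullback i) (from_pullback i)"
  by (simp add: inverse_maps_pullback)

lemma is_hmod_extension: "is_hmod n C cs Om extension"
  unfolding extension_def
  by (rule is_hmod_transport_hmod[OF is_hmod_pullback M.Om_subset inverse_maps_extension])

lemma carrier_extension: "carrier (cmp extension i) = carrier (cmp N i) \<times> carrier (cmp M i)"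
  by (simp add: extension_def)

lemma is_hom_extension_incl: "is_hom n C cs Om N extension (\<lambda>i x. (x, \<zero>\<^bsub>cmp M i\<^esub>))"
proof -
  have "is_hom n C cs Om N (sub_prod_hmod N M pullback) (\<lambda>i x. (eps_act cs N i x, \<zero>\<^bsub>cmp M i\<^esub>))"
  proof (rule is_hom_into_sub_prod_hmod[OF N.is_hom_eps_act M.is_hom_zero])
    fix i x assume i: "i \<in> Iset n" and x: "x \<in> carrier (cmp N i)"
    interpret Mi: Module.module fps_ring "cmp M i" using M.module_cmp[OF i] .
    interpret Ni: Module.module fps_ring "cmp N i" using N.module_cmp[OF i] .
    have "ecoset cs N i (eps_act cs N i x) = ecoset cs N i \<zero>\<^bsub>cmp N i\<^esub>"
      using N.ecoset_add_eps_act[OF i Ni.zero_closed x] x by (simp add: N.eps_act_closed[OF i])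
    then show "(eps_act cs N i x, \<zero>\<^bsub>cmp M i\<^esub>) \<in> pullback i"
      using x by (simp add: mem_pullback lift_zero[OF i] N.eps_act_closed[OF i])
  qed
  then have "is_hom n C cs Om N extension (\<lambda>i x. from_pullback i (eps_act cs N i x, \<zero>\<^bsub>cmp M i\<^esub>))"
    unfolding extension_def
    by (rule is_hom_to_transport_hmod[OF is_hmod_pullback M.Om_subset inverse_maps_extension])
  then show ?thesis
  proof (rule is_hom_cong[OF _ N.hmod M.Om_subset])
    fix i x assume i: "i \<in> Iset n" and x: "x \<in> carrier (cmp N i)"
    interpret Ni: Module.module fps_ring "cmp N i" using N.module_cmp[OF i] .
    have "eps_act cs N i x \<ominus>\<^bsub>cmp N i\<^esub> \<zero>\<^bsub>cmp N i\<^esub> = eps_act cs N i x"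
      using x by (simp add: Ni.add.inv_solve_right' N.eps_act_closed[OF i] Ni.minus_eq)
    then show "(x, \<zero>\<^bsub>cmp M i\<^esub>) = from_pullback i (eps_act cs N i x, \<zero>\<^bsub>cmp M i\<^esub>)"
      using x by (simp add: from_pullback_def lift_zero[OF i] N.eps_act_closed[OF i]
          N.eps_div_eps_act[OF i])
  qed
qed

lemma is_hom_extension_proj: "is_hom n C cs Om extension M (\<lambda>i p. snd p)"
proof -
  have "is_hom n C cs Om extension M (\<lambda>i u. snd (to_pullback i u))"
    unfolding extension_def
    by (rule is_hom_from_transport_hmod[OF is_hmod_pullback M.Om_subset inverse_maps_extension
          is_hom_snd_sub_prod_hmod[OF pullback_subset]])
  then show ?thesis
    by (rule is_hom_cong[OF _ is_hmod_extension M.Om_subset]) (simp add: to_pullback_def)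
qed

lemma splitting_lifts_red_hom:
  assumes ext: "ext1_zero n C cs Om M N"
  shows "\<exists>f. is_hom n C cs Om M N f \<and>
    (\<forall>i\<in>Iset n. \<forall>A\<in>carrier (cmp (Red cs M) i). \<phi> i A = red_hom cs N f i A)"
proof -
  obtain s where s: "is_hom n C cs Om M extension s"
    and snd_s: "\<forall>i\<in>Iset n. \<forall>b\<in>carrier (cmp M i). snd (s i b) = b"
    using ext[unfolded ext1_zero_def, rule_format, of extension] is_hmod_extension carrier_extension
      is_hom_extension_incl is_hom_extension_proj by blast
  define f where "f i b = fst (to_pullback i (s i b))" for i b
  have "is_hom n C cs Om extension N (\<lambda>i u. fst (to_pullback i u))"
    unfolding extension_def
    by (rule is_hom_from_transport_hmod[OF is_hmod_pullback M.Om_subset inverse_maps_extension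
          is_hom_fst_sub_prod_hmod[OF pullback_subset]])
  from is_hom_comp[OF s this M.Om_subset] have f: "is_hom n C cs Om M N f"
    unfolding f_def .
  have "\<phi> i (ecoset cs M i b) = red_hom cs N f i (ecoset cs M i b)"
    if i: "i \<in> Iset n" and b: "b \<in> carrier (cmp M i)" for i b
  proof -
    have "fst (s i b) \<in> carrier (cmp N i)"
      using is_hom_closed[OF s i b] by (auto simp: carrier_extension)
    then have "ecoset cs N i (f i b) = ecoset cs N i (\<psi> i b)"
      using snd_s i b by (simp add: f_def to_pullback_def N.ecoset_add_eps_act[OF i] lift_closed[OF i])
    then show ?thesis
      using i b by (simp add: red_hom_ecoset[OF f] lift_ecoset)
  qed
  then show ?thesis using f by (auto simp: Red_carrier)
qed

end

lemma (in hmodule_pair) red_hom_lifts_to_hom: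
  assumes ext: "ext1_zero n C cs Om M N" and \<phi>: "is_hom n C cs Om (Red cs M) (Red cs N) \<phi>"
  shows "\<exists>f. is_hom n C cs Om M N f \<and>
    (\<forall>i\<in>Iset n. \<forall>A\<in>carrier (cmp (Red cs M) i). \<phi> i A = red_hom cs N f i A)"
proof -
  obtain \<psi> where \<psi>: "\<And>i. i \<in> Iset n \<Longrightarrow> \<psi> i \<zero>\<^bsub>cmp M i\<^esub> = \<zero>\<^bsub>cmp N i\<^esub>"
    "\<And>i b. i \<in> Iset n \<Longrightarrow> b \<in> carrier (cmp M i) \<Longrightarrow> \<psi> i b \<in> carrier (cmp N i)"
    "\<And>i b. i \<in> Iset n \<Longrightarrow> b \<in> carrier (cmp M i) \<Longrightarrow> ecoset cs N i (\<psi> i b) = \<phi> i (ecoset cs M i b)"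
    using red_hom_set_lift[OF \<phi>] by metis
  interpret lifted_red_hom n C cs Om M N \<phi> \<psi>
    by unfold_locales (use M.cartan M.hmod N.hmod N.locally_free \<phi> \<psi> in auto)
  show ?thesis using ext by (rule splitting_lifts_red_hom)
qed

theorem lemma5p11:
  fixes n :: nat and C :: "nat \<Rightarrow> nat \<Rightarrow> int" and cs :: "nat \<Rightarrow> nat"
    and Om :: "(nat \<times> nat) set"
    and M :: "('f::field, 'm) hmod" and N :: "('f, 'n) hmod"
  assumes "cartan_setup n C cs Om"
    and "is_hmod n C cs Om M" and "is_hmod n C cs Om N"
    and "locally_free n M" and "locally_free n N"
    and "ext1_zero n C cs Om M N"
  shows
    \<comment> \<open>injectivity of F \<otimes> Hom(M,N) = Hom(M,N)/eps Hom(M,N) \<rightarrow> Hom_H(Red M, Red N)\<close>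
    "(\<forall>f. is_hom n C cs Om M N f \<and>
          (\<forall>i\<in>Iset n. \<forall>A\<in>carrier (cmp (Red cs M) i).
              red_hom cs N f i A = zero (cmp (Red cs N) i))
       \<longrightarrow> (\<exists>g. is_hom n C cs Om M N g \<and>
              (\<forall>i\<in>Iset n. \<forall>m\<in>carrier (cmp M i). f i m = eps_act cs N i (g i m))))
     \<and>
     \<comment> \<open>surjectivity\<close>
     (\<forall>\<phi>. is_hom n C cs Om (Red cs M) (Red cs N) \<phi>
       \<longrightarrow> (\<exists>f. is_hom n C cs Om M N f \<and>
              (\<forall>i\<in>Iset n. \<forall>A\<in>carrier (cmp (Red cs M) i). \<phi> i A = red_hom cs N f i A)))"
proof -
  interpret hmodule_pair n C cs Om M N
    by unfold_locales (use assms in auto)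
  show ?thesis
    using red_hom_eq_zero_imp_eps_factor red_hom_lifts_to_hom[OF assms(6)] by blast
qed

end
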